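(* Let $\Gamma$ be an infinite finitely generated group. If $\Gamma$ is algorithmically finite, then, with respect to any finite set of generators, $\Gamma$ has unsolvable UB-generic Word Problem and therefore unsolvable generic Word Problem.
   Context: For a finite generating set $X$, $\mathbb F_X$ is the free group on $X$, $\pi:\mathbb F_X\to\Gamma$ the canonical epimorphism, $|\cdot|$ the reduced word length, $B_n=\{\omega\in\mathbb F_X:|\omega|\le n\}$. $\Gamma$ is algorithmically finite if there is no computable enumeration of an infinite set of words in $\mathbb F_X$ whose images under $\pi$ are pairwise distinct. $S\subset\mathbb F_X$ is UB-generic if $\limsup_{n\to\infty}\max_{\omega\in\mathbb F_X}\frac{|S\cap\omega B_n|}{|B_n|}=1$, and generic if $|S^c\cap B_n|/|B_n|\to0$. $\Gamma$ has solvable Word Problem on $S$ if there is a partial algorithm halting at least on every $\omega\in S$ and, whenever it halts, correctly deciding whether $\pi(\omega)$ is trivial; solvable UB-generic (resp. generic) Word Problem with respect to $X$ means solvable on some UB-generic (resp. generic) $S\subset\mathbb F_X$. *)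

theory Defs
  imports Complex_Main "HOL-Algebra.Generated_Groups" "HOL-Library.Nat_Bijection"
    "HOL-Library.Liminf_Limsup" "HOL-Library.Extended_Real"
begin

datatype recf = Zf | Sf | Proj nat | Comp recf "recf list" | Prec recf recf | Mn recf

inductive ev :: "recf \<Rightarrow> nat list \<Rightarrow> nat \<Rightarrow> bool" where
  ev_Z: "ev Zf xs 0"
| ev_S: "ev Sf (x # xs) (Suc x)"
| ev_Proj: "i < length xs \<Longrightarrow> ev (Proj i) xs (xs ! i)"
| ev_Comp: "list_all2 (\<lambda>h y. ev h xs y) hs ys \<Longrightarrow> ev f ys z \<Longrightarrow> ev (Comp f hs) xs z"
| ev_Prec0: "ev f xs y \<Longrightarrow> ev (Prec f h) (0 # xs) y"
| ev_PrecS: "ev (Prec f h) (n # xs) y \<Longrightarrow> ev h (n # y # xs) z \<Longrightarrow> ev (Prec f h) (Suc n # xs) z"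
| ev_Mn: "ev f (n # xs) 0 \<Longrightarrow> (\<forall>m<n. \<exists>y. ev f (m # xs) y \<and> y \<noteq> 0) \<Longrightarrow> ev (Mn f) xs n"

text \<open>A letter (i, True) is x_i, (i, False) is x_i^-1.\<close>
type_synonym letter = "nat \<times> bool"

definition cancels :: "letter \<Rightarrow> letter \<Rightarrow> bool" where
  "cancels a b \<longleftrightarrow> fst a = fst b \<and> snd a \<noteq> snd b"

fun reduced :: "letter list \<Rightarrow> bool" where
  "reduced [] = True"
| "reduced [a] = True"
| "reduced (a # b # w) = (\<not> cancels a b \<and> reduced (b # w))"

definition FX :: "nat \<Rightarrow> letter list set" where
  "FX k = {w. (\<forall>a\<in>set w. fst a < k) \<and> reduced w}"

definition ballF :: "nat \<Rightarrow> nat \<Rightarrow> letter list set" where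
  "ballF k n = {w \<in> FX k. length w \<le> n}"

fun push :: "letter \<Rightarrow> letter list \<Rightarrow> letter list" where
  "push a [] = [a]"
| "push a (b # w) = (if cancels a b then w else a # b # w)"

definition fmult :: "letter list \<Rightarrow> letter list \<Rightarrow> letter list" where
  "fmult u v = foldr push u v"

definition piG :: "('a, 'b) monoid_scheme \<Rightarrow> (nat \<Rightarrow> 'a) \<Rightarrow> letter list \<Rightarrow> 'a" where
  "piG G g w = foldr (\<lambda>a acc. (if snd a then g (fst a) else inv\<^bsub>G\<^esub> (g (fst a))) \<otimes>\<^bsub>G\<^esub> acc) w \<one>\<^bsub>G\<^esub>"

definition code :: "letter list \<Rightarrow> nat" where
  "code w = list_encode (map (\<lambda>a. 2 * fst a + (if snd a then 1 else 0)) w)"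

definition algorithmically_finite :: "('a, 'b) monoid_scheme \<Rightarrow> nat \<Rightarrow> (nat \<Rightarrow> 'a) \<Rightarrow> bool" where
  "algorithmically_finite G k g \<longleftrightarrow>
     \<not> (\<exists>f S. S \<subseteq> FX k \<and> infinite S \<and> inj_on (piG G g) S \<and>
             (\<forall>n. \<exists>y. ev f [n] y) \<and> {y. \<exists>n. ev f [n] y} = code ` S)"

definition UB_generic :: "nat \<Rightarrow> letter list set \<Rightarrow> bool" where
  "UB_generic k S \<longleftrightarrow> S \<subseteq> FX k \<and>
     limsup (\<lambda>n. SUP \<omega>\<in>FX k. ereal (real (card (S \<inter> fmult \<omega> ` ballF k n)) / real (card (ballF k n)))) = 1"

definition generic :: "nat \<Rightarrow> letter list set \<Rightarrow> bool" where
  "generic k S \<longleftrightarrow> S \<subseteq> FX k \<and>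
     (\<lambda>n. real (card ((FX k - S) \<inter> ballF k n)) / real (card (ballF k n))) \<longlonglongrightarrow> 0"

definition WP_solvable_on :: "('a, 'b) monoid_scheme \<Rightarrow> nat \<Rightarrow> (nat \<Rightarrow> 'a) \<Rightarrow> letter list set \<Rightarrow> bool" where
  "WP_solvable_on G k g S \<longleftrightarrow> (\<exists>f.
     (\<forall>w\<in>S. \<exists>y. ev f [code w] y) \<and>
     (\<forall>w\<in>FX k. \<forall>y. ev f [code w] y \<longrightarrow> (y = 0 \<longleftrightarrow> piG G g w = \<one>\<^bsub>G\<^esub>)))"

definition UB_generic_WP_solvable :: "('a, 'b) monoid_scheme \<Rightarrow> nat \<Rightarrow> (nat \<Rightarrow> 'a) \<Rightarrow> bool" where
  "UB_generic_WP_solvable G k g \<longleftrightarrow> (\<exists>S. UB_generic k S \<and> WP_solvable_on G k g S)"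

definition generic_WP_solvable :: "('a, 'b) monoid_scheme \<Rightarrow> nat \<Rightarrow> (nat \<Rightarrow> 'a) \<Rightarrow> bool" where
  "generic_WP_solvable G k g \<longleftrightarrow> (\<exists>S. generic k S \<and> WP_solvable_on G k g S)"

end

theory Submission
  imports Defs
begin

text \<open>Suppose a partial algorithm solves the word problem on a UB-generic set \<open>S\<close>. Counting
  in translated balls shows that \<open>S\<close> contains a translate \<open>w C\<close> of every finite set \<open>C\<close> of reduced
  words. Given finitely many words \<open>l\<close>, take more words \<open>u\<close> with pairwise distinct values than there
  are \<open>l\<close>s and a translate with all \<open>w u l\<inverse>\<close> in \<open>S\<close>: the algorithm halts on each of them, and by
  pigeonhole some \<open>w u\<close> is certified by the algorithm to differ in \<open>\<Gamma>\<close> from every \<open>l\<close>.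
  Dovetailing over candidate words and running times therefore enumerates an infinite set of words
  with pairwise distinct images, so \<open>\<Gamma>\<close> is not algorithmically finite. Generic sets are
  UB-generic, which gives the second claim.\<close>

section \<open>Partial recursive functions\<close>

inductive_cases ev_ZfE: "ev Zf xs y"
inductive_cases ev_SfE: "ev Sf xs y"
inductive_cases ev_ProjE: "ev (Proj i) xs y"
inductive_cases ev_CompE: "ev (Comp f hs) xs y"
inductive_cases ev_PrecE: "ev (Prec f h) xs y"
inductive_cases ev_MnE: "ev (Mn f) xs y"

lemma ev_deterministic: "ev e xs y \<Longrightarrow> ev e xs y' \<Longrightarrow> y = y'"
proof (induction arbitrary: y' rule: ev.induct)
  case (ev_Z xs) then show ?case by (auto elim: ev_ZfE)
next
  case (ev_S x xs) then show ?case by (auto elim: ev_SfE)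
next
  case (ev_Proj i xs) then show ?case by (auto elim: ev_ProjE)
next
  case (ev_Comp xs hs ys f z)
  from ev_Comp.prems obtain ys' where hs: "list_all2 (\<lambda>h y. ev h xs y) hs ys'" and f: "ev f ys' y'"
    by (auto elim: ev_CompE)
  have "ys = ys'" using ev_Comp.IH(1) hs
  proof (induction hs arbitrary: ys ys')
    case (Cons h hs)
    then obtain y ys1 y' ys1' where "ys = y # ys1" "ys' = y' # ys1'"
      by (auto simp: list_all2_Cons1)
    with Cons show ?case by auto
  qed simp
  then show ?case using ev_Comp.IH(2) f by auto
next
  case (ev_Prec0 f xs y h)
  from ev_Prec0.prems show ?case by (rule ev_PrecE) (use ev_Prec0.IH in auto)
next
  case (ev_PrecS f h n xs y z)
  from ev_PrecS.prems show ?case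
  proof (rule ev_PrecE)
    fix n' xs' y1
    assume a: "Suc n # xs = Suc n' # xs'" "ev (Prec f h) (n' # xs') y1" "ev h (n' # y1 # xs') y'"
    then have "y1 = y" using ev_PrecS.IH(1) by auto
    then show ?thesis using a ev_PrecS.IH(2) by auto
  qed auto
next
  case (ev_Mn f n xs)
  from ev_Mn.prems have zero: "ev f (y' # xs) 0" and pos: "\<forall>m<y'. \<exists>y. ev f (m # xs) y \<and> y \<noteq> 0"
    by (auto elim: ev_MnE)
  show ?case
  proof (rule linorder_cases)
    assume "n < y'"
    then obtain y where "ev f (n # xs) y" "y \<noteq> 0" using pos by auto
    then show ?thesis using ev_Mn.IH(1) by auto
  next
    assume "y' < n"
    then show ?thesis using ev_Mn.IH(2) zero by auto
  qed
qed

definition computable :: "nat \<Rightarrow> (nat list \<Rightarrow> nat) \<Rightarrow> bool" where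
  "computable n h \<longleftrightarrow> (\<exists>e. \<forall>xs. length xs = n \<longrightarrow> ev e xs (h xs))"

named_theorems computable_intros

lemma computable_cong:
  "computable n f \<Longrightarrow> (\<And>xs. length xs = n \<Longrightarrow> f xs = g xs) \<Longrightarrow> computable n g"
  unfolding computable_def by metis

lemma computable_enumerates:
  assumes "computable 1 (\<lambda>v. h (v ! 0))"
  shows "\<exists>e. (\<forall>n. \<exists>y. ev e [n] y) \<and> {y. \<exists>n. ev e [n] y} = range h"
proof -
  obtain e where e: "\<forall>xs. length xs = 1 \<longrightarrow> ev e xs (h (xs ! 0))"
    using assms unfolding computable_def by blast
  then have "ev e [n] y \<longleftrightarrow> y = h n" for n y
    using ev_deterministic[of e "[n]"] by (metis One_nat_def length_Cons list.size(3) nth_Cons_0)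
  then show ?thesis by blast
qed

fun const_recf :: "nat \<Rightarrow> recf" where
  "const_recf 0 = Zf"
| "const_recf (Suc c) = Comp Sf [const_recf c]"

lemma ev_const_recf: "ev (const_recf c) xs c"
  by (induction c) (auto intro!: ev.intros)

lemma computable_const [computable_intros]: "computable n (\<lambda>_. c)"
  unfolding computable_def using ev_const_recf by blast

lemma computable_nth [computable_intros]: "i < n \<Longrightarrow> computable n (\<lambda>xs. xs ! i)"
  unfolding computable_def by (auto intro!: ev.intros exI[of _ "Proj i"])

lemma computable_Suc_nth: "computable 1 (\<lambda>xs. Suc (xs ! 0))"
  unfolding computable_def by (auto intro!: exI[of _ Sf] ev.intros simp: length_Suc_conv)

lemma computable_compose:
  assumes "computable m f" "length gs = m" "\<forall>g\<in>set gs. computable n g"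
  shows "computable n (\<lambda>xs. f (map (\<lambda>g. g xs) gs))"
proof -
  obtain ef where ef: "\<forall>xs. length xs = m \<longrightarrow> ev ef xs (f xs)"
    using assms(1) computable_def by auto
  have "\<exists>es. list_all2 (\<lambda>e g. \<forall>xs. length xs = n \<longrightarrow> ev e xs (g xs)) es gs"
    using assms(3)
  proof (induction gs)
    case (Cons g gs)
    then obtain es where "list_all2 (\<lambda>e g. \<forall>xs. length xs = n \<longrightarrow> ev e xs (g xs)) es gs" by auto
    moreover obtain e where "\<forall>xs. length xs = n \<longrightarrow> ev e xs (g xs)"
      using Cons.prems computable_def by auto
    ultimately show ?case by (auto intro!: exI[of _ "e # es"])
  qed simp
  then obtain es where es: "list_all2 (\<lambda>e g. \<forall>xs. length xs = n \<longrightarrow> ev e xs (g xs)) es gs" ..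
  have "ev (Comp ef es) xs (f (map (\<lambda>g. g xs) gs))" if "length xs = n" for xs
  proof (rule ev_Comp)
    show "list_all2 (\<lambda>h y. ev h xs y) es (map (\<lambda>g. g xs) gs)"
      using es that by (auto simp: list_all2_map2 elim!: list_all2_mono)
    show "ev ef (map (\<lambda>g. g xs) gs) (f (map (\<lambda>g. g xs) gs))" using ef assms(2) by auto
  qed
  then show ?thesis unfolding computable_def by blast
qed

lemma map_nth_shift: "length ws = j + n \<Longrightarrow> map (\<lambda>i. ws ! (i + j)) [0..<n] = drop j ws"
  by (rule nth_equalityI) (auto simp: add.commute)

lemma computable_compose_params:
  assumes h: "computable m h" and "length gs + n = m" and gs: "\<forall>g\<in>set gs. computable k g"
    and k: "k = j + n"
  shows "computable k (\<lambda>ys. h (map (\<lambda>g. g ys) gs @ drop j ys))"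
proof -
  have "computable k (\<lambda>ys. h (map (\<lambda>g. g ys) (gs @ map (\<lambda>i ys. ys ! (i + j)) [0..<n])))"
    using assms by (intro computable_compose[OF h]) (auto intro: computable_nth)
  then show ?thesis
    by (rule computable_cong) (simp add: comp_def map_nth_shift k)
qed

lemma computable_comp1:
  assumes "computable 1 (\<lambda>v. F (v ! 0))" "computable n a"
  shows "computable n (\<lambda>xs. F (a xs))"
  using computable_compose[OF assms(1), of "[a]" n] assms(2) by simp

lemma computable_comp2:
  assumes "computable 2 (\<lambda>v. F (v ! 0) (v ! 1))" "computable n a" "computable n b"
  shows "computable n (\<lambda>xs. F (a xs) (b xs))"
  using computable_compose[OF assms(1), of "[a, b]" n] assms(2,3) by simp

lemma computable_rec_nat [computable_intros]:
  assumes z: "computable n z" and s: "computable (Suc (Suc n)) (\<lambda>ys. s (ys ! 0) (ys ! 1) (drop 2 ys))"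
    and m: "computable n m"
  shows "computable n (\<lambda>xs. rec_nat (z xs) (\<lambda>i y. s i y xs) (m xs))"
proof -
  obtain ez where ez: "\<forall>xs. length xs = n \<longrightarrow> ev ez xs (z xs)" using z computable_def by auto
  obtain es where es: "\<forall>ys. length ys = Suc (Suc n) \<longrightarrow> ev es ys (s (ys ! 0) (ys ! 1) (drop 2 ys))"
    using s computable_def by auto
  have "ev (Prec ez es) (x # xs) (rec_nat (z xs) (\<lambda>i y. s i y xs) x)" if "length xs = n" for x xs
    using that by (induction x) (auto intro!: ev.intros ez[rule_format] es[rule_format, of "_ # _ # xs", simplified])
  then have "computable (Suc n) (\<lambda>ys. rec_nat (z (tl ys)) (\<lambda>i y. s i y (tl ys)) (hd ys))"
    unfolding computable_def by (auto intro!: exI[of _ "Prec ez es"] simp: length_Suc_conv)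
  from computable_compose_params[OF this, of "[m]" n n 0] m show ?thesis by simp
qed

lemma computable_nth_drop2 [computable_intros]: "Suc (Suc i) < n \<Longrightarrow> computable n (\<lambda>ys. drop 2 ys ! i)"
  by (rule computable_cong[OF computable_nth[of "Suc (Suc i)"]]) auto

lemma computable_Suc [computable_intros]: "computable n a \<Longrightarrow> computable n (\<lambda>xs. Suc (a xs))"
  by (rule computable_comp1[OF computable_Suc_nth])

lemma computable_add [computable_intros]:
  "computable n a \<Longrightarrow> computable n b \<Longrightarrow> computable n (\<lambda>xs. a xs + b xs)"
proof (rule computable_comp2[where F = "(+)"])
  have "rec_nat a (\<lambda>i y. Suc y) b = a + (b::nat)" for a b by (induction b) auto
  moreover have "computable 2 (\<lambda>v. rec_nat (v ! 0) (\<lambda>i y. Suc y) (v ! 1))"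
    by (intro computable_intros) auto
  ultimately show "computable 2 (\<lambda>v. v ! 0 + v ! 1)" by simp
qed

lemma computable_pred [computable_intros]: "computable n a \<Longrightarrow> computable n (\<lambda>xs. a xs - 1)"
proof (rule computable_comp1[where F = "\<lambda>x. x - 1"])
  have "rec_nat 0 (\<lambda>i y. i) b = b - (1::nat)" for b by (induction b) auto
  moreover have "computable 1 (\<lambda>v. rec_nat 0 (\<lambda>i y. i) (v ! 0))"
    by (intro computable_intros) auto
  ultimately show "computable 1 (\<lambda>v. v ! 0 - 1)" by simp
qed

lemma computable_diff [computable_intros]:
  "computable n a \<Longrightarrow> computable n b \<Longrightarrow> computable n (\<lambda>xs. a xs - b xs)"
proof (rule computable_comp2[where F = "(-)"])
  have "rec_nat a (\<lambda>i y. y - 1) b = a - (b::nat)" for a b by (induction b) auto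
  moreover have "computable 2 (\<lambda>v. rec_nat (v ! 0) (\<lambda>i y. y - 1) (v ! 1))"
    by (intro computable_intros) auto
  ultimately show "computable 2 (\<lambda>v. v ! 0 - v ! 1)" by simp
qed

lemma computable_mult [computable_intros]:
  "computable n a \<Longrightarrow> computable n b \<Longrightarrow> computable n (\<lambda>xs. a xs * b xs)"
proof (rule computable_comp2[where F = "(*)"])
  have "rec_nat 0 (\<lambda>i y. y + a) b = a * (b::nat)" for a b by (induction b) auto
  moreover have "computable 2 (\<lambda>v. rec_nat 0 (\<lambda>i y. y + v ! 0) (v ! 1))"
    by (intro computable_intros) auto
  ultimately show "computable 2 (\<lambda>v. v ! 0 * v ! 1)" by simp
qed

lemma computable_mod2 [computable_intros]: "computable n a \<Longrightarrow> computable n (\<lambda>xs. a xs mod 2)"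
proof (rule computable_comp1[where F = "\<lambda>x. x mod 2"])
  have "rec_nat 0 (\<lambda>i y. 1 - y) x = x mod (2::nat)" for x by (induction x) (auto simp: mod_Suc)
  moreover have "computable 1 (\<lambda>v. rec_nat 0 (\<lambda>i y. 1 - y) (v ! 0))"
    by (intro computable_intros) auto
  ultimately show "computable 1 (\<lambda>v. v ! 0 mod 2)" by simp
qed

definition decidable :: "nat \<Rightarrow> (nat list \<Rightarrow> bool) \<Rightarrow> bool" where
  "decidable n P \<longleftrightarrow> computable n (\<lambda>xs. of_bool (P xs))"

lemma computable_If [computable_intros]:
  assumes "decidable n P" "computable n a" "computable n b"
  shows "computable n (\<lambda>xs. if P xs then a xs else b xs)"
proof -
  have "computable n (\<lambda>xs. of_bool (P xs) * a xs + (1 - of_bool (P xs)) * b xs)"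
    using assms unfolding decidable_def by (intro computable_intros)
  then show ?thesis by (rule computable_cong) auto
qed

lemma decidable_eq_0 [computable_intros]: "computable n a \<Longrightarrow> decidable n (\<lambda>xs. a xs = 0)"
  unfolding decidable_def
  by (rule computable_cong[where f = "\<lambda>xs. 1 - a xs"]) (auto intro: computable_intros)

lemma decidable_le [computable_intros]:
  "computable n a \<Longrightarrow> computable n b \<Longrightarrow> decidable n (\<lambda>xs. a xs \<le> b xs)"
  using decidable_eq_0[of n "\<lambda>xs. a xs - b xs"] computable_diff by simp

lemma decidable_less [computable_intros]:
  "computable n a \<Longrightarrow> computable n b \<Longrightarrow> decidable n (\<lambda>xs. a xs < b xs)"
  using decidable_le[of n "\<lambda>xs. Suc (a xs)" b] computable_Suc by (simp add: Suc_le_eq)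

lemma decidable_not [computable_intros]: "decidable n P \<Longrightarrow> decidable n (\<lambda>xs. \<not> P xs)"
  unfolding decidable_def
  by (rule computable_cong[where f = "\<lambda>xs. 1 - of_bool (P xs)"]) (auto intro: computable_intros)

lemma decidable_conj [computable_intros]:
  "decidable n P \<Longrightarrow> decidable n Q \<Longrightarrow> decidable n (\<lambda>xs. P xs \<and> Q xs)"
  unfolding decidable_def
  by (rule computable_cong[where f = "\<lambda>xs. of_bool (P xs) * of_bool (Q xs)"]) (auto intro: computable_intros)

lemma decidable_eq [computable_intros]:
  assumes "computable n a" "computable n b"
  shows "decidable n (\<lambda>xs. a xs = b xs)"
proof -
  have "decidable n (\<lambda>xs. a xs \<le> b xs \<and> b xs \<le> a xs)"
    using assms by (intro computable_intros)
  then show ?thesis by (simp add: order_eq_iff[symmetric])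
qed

lemma computable_compose2_params:
  assumes "computable (Suc (Suc n)) (\<lambda>ys. F (ys ! 0) (ys ! 1) (drop 2 ys))"
    and "computable (j + n) a" "computable (j + n) b"
  shows "computable (j + n) (\<lambda>ys. F (a ys) (b ys) (drop j ys))"
  using computable_compose_params[OF assms(1), of "[a, b]" n "j + n" j] assms(2,3)
  by (simp add: numeral_2_eq_2)

lemma computable_triangle [computable_intros]: "computable n a \<Longrightarrow> computable n (\<lambda>xs. triangle (a xs))"
proof (rule computable_comp1[where F = triangle])
  have "rec_nat 0 (\<lambda>i y. y + Suc i) x = triangle x" for x by (induction x) auto
  moreover have "computable 1 (\<lambda>v. rec_nat 0 (\<lambda>i y. y + Suc i) (v ! 0))"
    by (intro computable_intros) auto
  ultimately show "computable 1 (\<lambda>v. triangle (v ! 0))" by simp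
qed

definition triangle_root :: "nat \<Rightarrow> nat" where
  "triangle_root n = rec_nat 0 (\<lambda>j r. if triangle (Suc j) \<le> n then Suc j else r) n"

lemma triangle_root_bounds: "triangle (triangle_root n) \<le> n" "n < triangle (Suc (triangle_root n))"
proof -
  let ?r = "rec_nat 0 (\<lambda>j r. if triangle (Suc j) \<le> n then Suc j else r)"
  have inv: "triangle (?r m) \<le> n \<and> (\<forall>i. ?r m < i \<and> i \<le> m \<longrightarrow> n < triangle i)" for m
    by (induction m) (auto simp del: triangle_Suc simp: le_Suc_eq)
  show "triangle (triangle_root n) \<le> n" using inv[of n] by (simp add: triangle_root_def)
  show "n < triangle (Suc (triangle_root n))"
  proof (cases "triangle_root n < n")
    case True then show ?thesis
      using inv[of n] by (auto simp: triangle_root_def simp del: triangle_Suc)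
  qed simp
qed

lemma prod_decode_triangle_root:
  "prod_decode n = (n - triangle (triangle_root n), triangle_root n - (n - triangle (triangle_root n)))"
proof -
  let ?s = "triangle_root n"
  have "n - triangle ?s \<le> ?s" using triangle_root_bounds(2)[of n] by simp
  then have "prod_encode (n - triangle ?s, ?s - (n - triangle ?s)) = n"
    using triangle_root_bounds(1)[of n] by (simp add: prod_encode_def)
  then show ?thesis by (metis prod_encode_inverse)
qed

lemma computable_triangle_root [computable_intros]:
  "computable n a \<Longrightarrow> computable n (\<lambda>xs. triangle_root (a xs))"
  unfolding triangle_root_def by (rule computable_comp1) (intro computable_intros, auto)

definition npair :: "nat \<Rightarrow> nat \<Rightarrow> nat" where "npair a b = prod_encode (a, b)"
definition nfst :: "nat \<Rightarrow> nat" where "nfst n = fst (prod_decode n)"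
definition nsnd :: "nat \<Rightarrow> nat" where "nsnd n = snd (prod_decode n)"

lemma nfst_npair [simp]: "nfst (npair a b) = a" and nsnd_npair [simp]: "nsnd (npair a b) = b"
  by (auto simp: nfst_def nsnd_def npair_def)

lemma computable_npair [computable_intros]:
  "computable n a \<Longrightarrow> computable n b \<Longrightarrow> computable n (\<lambda>xs. npair (a xs) (b xs))"
  unfolding npair_def prod_encode_def prod.case by (intro computable_intros)

lemma computable_nfst [computable_intros]: "computable n a \<Longrightarrow> computable n (\<lambda>xs. nfst (a xs))"
  unfolding nfst_def prod_decode_triangle_root fst_conv by (intro computable_intros)

lemma computable_nsnd [computable_intros]: "computable n a \<Longrightarrow> computable n (\<lambda>xs. nsnd (a xs))"
  unfolding nsnd_def prod_decode_triangle_root snd_conv by (intro computable_intros)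

definition nhd :: "nat \<Rightarrow> nat" where "nhd c = nfst (c - 1)"
definition ntl :: "nat \<Rightarrow> nat" where "ntl c = nsnd (c - 1)"
definition ncons :: "nat \<Rightarrow> nat \<Rightarrow> nat" where "ncons x c = Suc (npair x c)"

lemma nhd_list_encode [simp]: "nhd (list_encode (x # xs)) = x"
  and ntl_list_encode [simp]: "ntl (list_encode (x # xs)) = list_encode xs"
  and ncons_list_encode [simp]: "ncons x (list_encode xs) = list_encode (x # xs)"
  by (auto simp: nhd_def ntl_def ncons_def npair_def nfst_def nsnd_def)

lemma ncons_0 [simp]: "ncons x 0 = list_encode [x]"
  using ncons_list_encode[of x "[]"] by simp

lemma list_encode_eq_0_iff [simp]: "list_encode xs = 0 \<longleftrightarrow> xs = []"
  by (cases xs) auto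

declare list_encode.simps(2) [simp del]

lemma computable_nhd [computable_intros]: "computable n a \<Longrightarrow> computable n (\<lambda>xs. nhd (a xs))"
  unfolding nhd_def by (intro computable_intros)

lemma computable_ntl [computable_intros]: "computable n a \<Longrightarrow> computable n (\<lambda>xs. ntl (a xs))"
  unfolding ntl_def by (intro computable_intros)

lemma computable_ncons [computable_intros]:
  "computable n a \<Longrightarrow> computable n b \<Longrightarrow> computable n (\<lambda>xs. ncons (a xs) (b xs))"
  unfolding ncons_def by (intro computable_intros)

lemma length_le_list_encode: "length xs \<le> list_encode xs"
proof (induction xs)
  case (Cons x xs)
  then show ?case using le_prod_encode_2[of "list_encode xs" x] by (simp add: list_encode.simps)
qed simp

text \<open>A fold over a coded list runs as a loop on the state (rest of the list, accumulator); since a list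
  is shorter than its code, iterating the loop body code-many times suffices.\<close>

definition fold_step :: "(nat \<Rightarrow> nat \<Rightarrow> nat) \<Rightarrow> nat \<Rightarrow> nat" where
  "fold_step F st = (if nfst st = 0 then st else npair (ntl (nfst st)) (F (nhd (nfst st)) (nsnd st)))"

lemma funpow_fold_step:
  "length ds \<le> m \<Longrightarrow> (fold_step F ^^ m) (npair (list_encode ds) acc) = npair 0 (fold F ds acc)"
proof (induction ds arbitrary: m acc)
  case Nil
  have "(fold_step F ^^ m) (npair 0 acc) = npair 0 acc" for m
    by (induction m) (auto simp: fold_step_def)
  then show ?case by simp
next
  case (Cons d ds)
  then obtain m' where m: "m = Suc m'" "length ds \<le> m'" by (cases m) auto
  have "fold_step F (npair (list_encode (d # ds)) acc) = npair (list_encode ds) (F d acc)"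
    by (simp add: fold_step_def)
  then show ?case unfolding m(1) funpow_Suc_right comp_def by (simp add: Cons.IH[OF m(2)])
qed

lemma fold_list_decode: "fold F (list_decode c) acc = nsnd ((fold_step F ^^ c) (npair c acc))"
  using funpow_fold_step[OF length_le_list_encode, of "list_decode c" F acc] by simp

lemma computable_fold:
  assumes F: "computable (Suc (Suc n)) (\<lambda>ys. F (ys ! 0) (ys ! 1) (drop 2 ys))"
    and "computable n c" "computable n a"
  shows "computable n (\<lambda>xs. fold (\<lambda>x acc. F x acc xs) (list_decode (c xs)) (a xs))"
proof -
  have "rec_nat a (\<lambda>i st. f st) k = (f ^^ k) a" for a k and f :: "nat \<Rightarrow> nat" by (induction k) auto
  moreover have "computable (2 + n) (\<lambda>ys. F (nhd (nfst (ys ! 1))) (nsnd (ys ! 1)) (drop 2 ys))"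
    by (rule computable_compose2_params[OF F]) (intro computable_intros, simp)+
  then have "computable n (\<lambda>xs. nsnd (rec_nat (npair (c xs) (a xs))
      (\<lambda>i st. fold_step (\<lambda>x acc. F x acc xs) st) (c xs)))"
    unfolding fold_step_def using assms by (intro computable_intros) auto
  ultimately show ?thesis by (simp add: fold_list_decode)
qed

lemma fold_and_of_bool:
  "fold (\<lambda>x acc. acc * of_bool (P x)) ds b = (b :: nat) * of_bool (\<forall>x\<in>set ds. P x)"
  by (induction ds arbitrary: b) auto

lemma decidable_list_all:
  assumes P: "decidable (Suc n) (\<lambda>ys. P (hd ys) (tl ys))" and c: "computable n c"
  shows "decidable n (\<lambda>xs. \<forall>x\<in>set (list_decode (c xs)). P x xs)"
proof -
  have "computable (Suc (Suc n))
      (\<lambda>ys. (\<lambda>zs. of_bool (P (hd zs) (tl zs))) (map (\<lambda>g. g ys) [\<lambda>ys. ys ! 0] @ drop 2 ys))"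
    using P unfolding decidable_def by (rule computable_compose_params) (auto intro: computable_intros)
  then have "computable (Suc (Suc n)) (\<lambda>ys. ys ! 1 * of_bool (P (ys ! 0) (drop 2 ys)))"
    by (intro computable_mult computable_nth) auto
  from computable_fold[OF this c computable_const]
  have "computable n (\<lambda>xs. fold (\<lambda>x acc. acc * of_bool (P x xs)) (list_decode (c xs)) 1)" .
  then show ?thesis unfolding decidable_def fold_and_of_bool by simp
qed

section \<open>Evaluation with bounded search\<close>

text \<open>\<open>ev_bounded e t xs\<close> evaluates \<open>e\<close> with every unbounded search \<open>Mn\<close> cut off after the
  candidates below \<open>t\<close>. It converges to \<open>ev\<close> as \<open>t\<close> grows, and for fixed \<open>e\<close> it is computable in
  \<open>t\<close> and \<open>xs\<close>: this replaces a universal machine.\<close>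

definition option_code :: "nat option \<Rightarrow> nat" where
  "option_code r = (case r of None \<Rightarrow> 0 | Some y \<Rightarrow> Suc y)"

lemma option_code_simps [simp]: "option_code None = 0" "option_code (Some y) = Suc y"
  by (auto simp: option_code_def)

lemma option_code_eq_0_iff [simp]: "option_code r = 0 \<longleftrightarrow> r = None"
  and zero_eq_option_code_iff [simp]: "0 = option_code r \<longleftrightarrow> r = None"
  by (cases r; auto)+

text \<open>State of a bounded search: \<open>1\<close> still searching, \<open>0\<close> hit an undefined value, \<open>n + 2\<close> found \<open>n\<close>.\<close>
definition mu_step :: "nat option \<Rightarrow> nat \<Rightarrow> nat \<Rightarrow> nat" where
  "mu_step r j s = (if s = 1 then (case r of None \<Rightarrow> 0 | Some 0 \<Rightarrow> Suc (Suc j) | Some _ \<Rightarrow> 1) else s)"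

definition mu_state :: "(nat \<Rightarrow> nat option) \<Rightarrow> nat \<Rightarrow> nat" where
  "mu_state P t = rec_nat 1 (\<lambda>j s. mu_step (P j) j s) t"

definition bounded_mu :: "(nat \<Rightarrow> nat option) \<Rightarrow> nat \<Rightarrow> nat option" where
  "bounded_mu P t = (if 2 \<le> mu_state P t then Some (mu_state P t - 2) else None)"

primrec ev_bounded :: "recf \<Rightarrow> nat \<Rightarrow> nat list \<Rightarrow> nat option" where
  "ev_bounded Zf = (\<lambda>t xs. Some 0)"
| "ev_bounded Sf = (\<lambda>t xs. case xs of [] \<Rightarrow> None | x # _ \<Rightarrow> Some (Suc x))"
| "ev_bounded (Proj i) = (\<lambda>t xs. if i < length xs then Some (xs ! i) else None)"
| "ev_bounded (Comp f hs) = (\<lambda>t xs. let rs = map (\<lambda>h. ev_bounded h t xs) hs in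
      if None \<in> set rs then None else ev_bounded f t (map the rs))"
| "ev_bounded (Prec f h) = (\<lambda>t xs. case xs of [] \<Rightarrow> None | x # ys \<Rightarrow>
      rec_nat (ev_bounded f t ys) (\<lambda>i r. case r of None \<Rightarrow> None | Some y \<Rightarrow> ev_bounded h t (i # y # ys)) x)"
| "ev_bounded (Mn f) = (\<lambda>t xs. bounded_mu (\<lambda>m. ev_bounded f t (m # xs)) t)"

lemma mu_state_eq_1_iff: "mu_state P j = 1 \<longleftrightarrow> (\<forall>m<j. \<exists>y. P m = Some (Suc y))"
proof (induction j)
  case (Suc j)
  have "mu_state P (Suc j) = 1 \<longleftrightarrow> mu_state P j = 1 \<and> (\<exists>y. P j = Some (Suc y))"
    by (auto simp: mu_state_def mu_step_def split: option.splits nat.splits)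
  then show ?case using Suc by (auto simp: less_Suc_eq)
qed (simp add: mu_state_def)

lemma mu_state_found_iff:
  "mu_state P j = Suc (Suc n) \<longleftrightarrow> n < j \<and> P n = Some 0 \<and> (\<forall>m<n. \<exists>y. P m = Some (Suc y))"
proof (induction j)
  case (Suc j)
  have "mu_state P (Suc j) = Suc (Suc n) \<longleftrightarrow>
      (mu_state P j = 1 \<and> P j = Some 0 \<and> n = j) \<or> mu_state P j = Suc (Suc n)"
    by (auto simp: mu_state_def mu_step_def split: option.splits nat.splits)
  then show ?case unfolding Suc mu_state_eq_1_iff by (auto simp: less_Suc_eq)
qed (simp add: mu_state_def)

lemma bounded_mu_eq_Some_iff:
  "bounded_mu P t = Some n \<longleftrightarrow> n < t \<and> P n = Some 0 \<and> (\<forall>m<n. \<exists>y. P m = Some (Suc y))"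
proof -
  have "bounded_mu P t = Some n \<longleftrightarrow> mu_state P t = Suc (Suc n)"
    by (auto simp: bounded_mu_def)
  then show ?thesis using mu_state_found_iff by blast
qed

lemma ev_bounded_Comp_eq_Some_iff:
  "ev_bounded (Comp f hs) t xs = Some z \<longleftrightarrow>
    (\<exists>ys. list_all2 (\<lambda>h y. ev_bounded h t xs = Some y) hs ys \<and> ev_bounded f t ys = Some z)"
proof -
  have all_defined: "None \<notin> set (map (\<lambda>h. ev_bounded h t xs) hs) \<longleftrightarrow>
      (\<exists>ys. list_all2 (\<lambda>h y. ev_bounded h t xs = Some y) hs ys)"
    by (induction hs) (auto simp: list_all2_Cons1)
  have vals: "list_all2 (\<lambda>h y. ev_bounded h t xs = Some y) hs ys \<Longrightarrow>
      map (\<lambda>h. the (ev_bounded h t xs)) hs = ys" for ys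
    by (induction hs arbitrary: ys) (auto simp: list_all2_Cons1)
  show ?thesis
    using all_defined vals by (auto simp: Let_def comp_def)
qed

lemma ev_bounded_Prec_Suc:
  "ev_bounded (Prec f h) t (Suc n # ys) =
    (case ev_bounded (Prec f h) t (n # ys) of None \<Rightarrow> None | Some y \<Rightarrow> ev_bounded h t (n # y # ys))"
  by simp

lemma ev_bounded_Prec_0: "ev_bounded (Prec f h) t (0 # ys) = ev_bounded f t ys"
  by simp

declare ev_bounded.simps(4,5) [simp del]

lemma ev_bounded_sound: "ev_bounded e t xs = Some y \<Longrightarrow> ev e xs y"
proof (induction e arbitrary: xs y)
  case (Comp f hs)
  then obtain ys where ys: "list_all2 (\<lambda>h y. ev_bounded h t xs = Some y) hs ys" "ev_bounded f t ys = Some y"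
    by (auto simp: ev_bounded_Comp_eq_Some_iff)
  have "list_all2 (\<lambda>h y. ev h xs y) hs ys"
    using ys(1) Comp.IH(2) by (auto elim!: list.rel_mono_strong)
  then show ?case using ys(2) Comp.IH(1) by (auto intro: ev.intros)
next
  case (Prec f h)
  then obtain x ys where xs: "xs = x # ys" by (cases xs) (auto simp: ev_bounded.simps(5))
  have "ev_bounded (Prec f h) t (x # ys) = Some y \<Longrightarrow> ev (Prec f h) (x # ys) y" for y
  proof (induction x arbitrary: y)
    case 0 then show ?case using Prec.IH(1) by (auto intro: ev.intros simp: ev_bounded_Prec_0)
  next
    case (Suc x)
    then obtain y0 where "ev_bounded (Prec f h) t (x # ys) = Some y0" "ev_bounded h t (x # y0 # ys) = Some y"
      by (auto simp: ev_bounded_Prec_Suc split: option.splits)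
    then show ?case using Suc.IH Prec.IH(2) by (auto intro: ev.intros)
  qed
  then show ?case using Prec.prems xs by auto
next
  case (Mn f)
  then have "ev_bounded f t (y # xs) = Some 0" "\<forall>m<y. \<exists>z. ev_bounded f t (m # xs) = Some (Suc z)"
    by (auto simp: bounded_mu_eq_Some_iff)
  then show ?case using Mn.IH by (intro ev_Mn) blast+
qed (auto intro: ev.intros split: list.splits if_splits)

lemma ev_imp_eventually_ev_bounded: "ev e xs y \<Longrightarrow> \<forall>\<^sub>F t in sequentially. ev_bounded e t xs = Some y"
proof (induction rule: ev.induct)
  case (ev_Comp xs hs ys f z)
  from ev_Comp.IH(1) have "\<forall>\<^sub>F t in sequentially. list_all2 (\<lambda>h y. ev_bounded h t xs = Some y) hs ys"
  proof (induction rule: list_all2_induct)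
    case (Cons h hs y ys)
    from conjunct2[OF Cons.hyps(1)] Cons.IH show ?case by eventually_elim simp
  qed simp
  with ev_Comp.IH(2) show ?case
    by eventually_elim (auto simp: ev_bounded_Comp_eq_Some_iff)
next
  case (ev_Prec0 f xs y h)
  then show ?case by (simp add: ev_bounded_Prec_0)
next
  case (ev_PrecS f h n xs y z)
  from ev_PrecS.IH show ?case by eventually_elim (simp add: ev_bounded_Prec_Suc)
next
  case (ev_Mn f n xs)
  have "\<forall>\<^sub>F t in sequentially. \<exists>z. ev_bounded f t (m # xs) = Some (Suc z)" if "m < n" for m
  proof -
    obtain y where "\<forall>\<^sub>F t in sequentially. ev_bounded f t (m # xs) = Some y" "y \<noteq> 0"
      using ev_Mn.IH(2) \<open>m < n\<close> by blast
    then show ?thesis by (auto elim!: eventually_mono simp: not0_implies_Suc)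
  qed
  then have "\<forall>\<^sub>F t in sequentially. \<forall>m\<in>{..<n}. \<exists>z. ev_bounded f t (m # xs) = Some (Suc z)"
    by (intro eventually_ball_finite) auto
  moreover have "\<forall>\<^sub>F t in sequentially. n < t" by (rule eventually_gt_at_top)
  ultimately show ?case using ev_Mn.IH(1)
    by eventually_elim (auto simp: bounded_mu_eq_Some_iff)
qed auto

lemma computable_prod_list:
  "(\<And>h. h \<in> set hs \<Longrightarrow> computable n (G h)) \<Longrightarrow> computable n (\<lambda>zs. prod_list (map (\<lambda>h. G h zs) hs))"
  by (induction hs) (auto intro: computable_intros)

lemma option_code_ev_bounded_Comp:
  "option_code (ev_bounded (Comp f hs) t xs) =
    (if prod_list (map (\<lambda>h. option_code (ev_bounded h t xs)) hs) = 0 then 0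
     else option_code (ev_bounded f t (map (\<lambda>h. option_code (ev_bounded h t xs) - 1) hs)))"
proof (cases "None \<in> set (map (\<lambda>h. ev_bounded h t xs) hs)")
  case True
  then have "prod_list (map (\<lambda>h. option_code (ev_bounded h t xs)) hs) = 0"
    by (force simp: prod_list_zero_iff)
  with True show ?thesis by (simp add: ev_bounded.simps(4))
next
  case False
  then have "the (ev_bounded h t xs) = option_code (ev_bounded h t xs) - 1" if "h \<in> set hs" for h
    using that by (cases "ev_bounded h t xs") force+
  then have m: "map (\<lambda>h. the (ev_bounded h t xs)) hs = map (\<lambda>h. option_code (ev_bounded h t xs) - 1) hs"
    by simp
  have p: "prod_list (map (\<lambda>h. option_code (ev_bounded h t xs)) hs) \<noteq> 0"
    using False by (auto simp: prod_list_zero_iff image_iff) (metis not_None_eq)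
  show ?thesis using False p by (simp add: ev_bounded.simps(4) comp_def m)
qed

lemma computable_ev_bounded_Comp:
  assumes f: "computable (Suc (length hs)) (\<lambda>zs. option_code (ev_bounded f (hd zs) (tl zs)))"
    and hs: "\<And>h. h \<in> set hs \<Longrightarrow> computable (Suc n) (\<lambda>zs. option_code (ev_bounded h (hd zs) (tl zs)))"
  shows "computable (Suc n) (\<lambda>zs. option_code (ev_bounded (Comp f hs) (hd zs) (tl zs)))"
proof -
  let ?G = "\<lambda>h zs. option_code (ev_bounded h (hd zs) (tl zs))"
  have "computable (Suc n) (\<lambda>zs. (\<lambda>ws. option_code (ev_bounded f (hd ws) (tl ws)))
      (map (\<lambda>g. g zs) ((\<lambda>zs. zs ! 0) # map (\<lambda>h zs. ?G h zs - 1) hs)))"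
    using hs by (intro computable_compose[OF f]) (auto intro: computable_intros)
  then have "computable (Suc n) (\<lambda>zs. option_code (ev_bounded f (hd zs) (map (\<lambda>h. ?G h zs - 1) hs)))"
    by (rule computable_cong) (auto simp: comp_def length_Suc_conv)
  then have "computable (Suc n) (\<lambda>zs. if prod_list (map (\<lambda>h. ?G h zs) hs) = 0 then 0
      else option_code (ev_bounded f (hd zs) (map (\<lambda>h. ?G h zs - 1) hs)))"
    using hs by (intro computable_intros computable_prod_list)
  then show ?thesis by (simp only: option_code_ev_bounded_Comp)
qed

lemma option_code_ev_bounded_Prec:
  "option_code (ev_bounded (Prec f h) t (x # ys)) =
    rec_nat (option_code (ev_bounded f t ys))
      (\<lambda>i r. if r = 0 then 0 else option_code (ev_bounded h t (i # (r - 1) # ys))) x"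
proof (induction x)
  case (Suc x)
  then show ?case
    by (cases "ev_bounded (Prec f h) t (x # ys)") (simp_all add: ev_bounded_Prec_Suc Suc.IH[symmetric])
qed (simp add: ev_bounded_Prec_0)

lemma computable_ev_bounded_Prec:
  assumes f: "computable (Suc n) (\<lambda>zs. option_code (ev_bounded f (hd zs) (tl zs)))"
    and h: "computable (Suc (Suc (Suc n))) (\<lambda>zs. option_code (ev_bounded h (hd zs) (tl zs)))"
  shows "computable (Suc (Suc n)) (\<lambda>zs. option_code (ev_bounded (Prec f h) (hd zs) (tl zs)))"
proof -
  have "computable (Suc (Suc n)) (\<lambda>zs. (\<lambda>ws. option_code (ev_bounded f (hd ws) (tl ws)))
      (map (\<lambda>g. g zs) [\<lambda>zs. zs ! 0] @ drop 2 zs))"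
    by (rule computable_compose_params[OF f]) (auto intro: computable_intros)
  then have base: "computable (Suc (Suc n)) (\<lambda>zs. option_code (ev_bounded f (zs ! 0) (drop 2 zs)))"
    by simp
  have "computable (Suc (Suc (Suc (Suc n)))) (\<lambda>ws. (\<lambda>ws. option_code (ev_bounded h (hd ws) (tl ws)))
      (map (\<lambda>g. g ws) [\<lambda>ws. ws ! 2, \<lambda>ws. ws ! 0, \<lambda>ws. ws ! 1 - 1] @ drop 4 ws))"
    by (rule computable_compose_params[OF h]) (auto intro: computable_intros)
  then have "computable (Suc (Suc (Suc (Suc n))))
      (\<lambda>ws. option_code (ev_bounded h (drop 2 ws ! 0) (ws ! 0 # (ws ! 1 - 1) # drop 2 (drop 2 ws))))"
    by (rule computable_cong) (auto simp: numeral_eq_Suc length_Suc_conv)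
  then have step: "computable (Suc (Suc (Suc (Suc n)))) (\<lambda>ws. if ws ! 1 = 0 then 0
      else option_code (ev_bounded h (drop 2 ws ! 0) (ws ! 0 # (ws ! 1 - 1) # drop 2 (drop 2 ws))))"
    by (intro computable_intros) auto
  from computable_rec_nat[OF base step computable_nth[of 1]]
  have "computable (Suc (Suc n)) (\<lambda>zs. rec_nat (option_code (ev_bounded f (zs ! 0) (drop 2 zs)))
      (\<lambda>i r. if r = 0 then 0 else option_code (ev_bounded h (zs ! 0) (i # (r - 1) # drop 2 zs))) (zs ! 1))"
    by simp
  then show ?thesis
    by (rule computable_cong)
      (auto simp: length_Suc_conv numeral_eq_Suc option_code_ev_bounded_Prec cong: if_cong)
qed

lemma option_code_bounded_mu:
  "option_code (bounded_mu P t) = (if 2 \<le> mu_state P t then mu_state P t - 1 else 0)"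
  by (auto simp: bounded_mu_def)

lemma mu_state_option_code:
  "mu_state P t = rec_nat 1 (\<lambda>j s. if s = 1 then (if option_code (P j) = 0 then 0
     else if option_code (P j) = 1 then Suc (Suc j) else 1) else s) t"
  unfolding mu_state_def mu_step_def
  by (rule arg_cong[where f = "\<lambda>s. rec_nat 1 s t"]) (auto simp: fun_eq_iff option_code_def split: option.split nat.split)

lemma computable_ev_bounded_Mn:
  assumes f: "computable (Suc (Suc n)) (\<lambda>zs. option_code (ev_bounded f (hd zs) (tl zs)))"
  shows "computable (Suc n) (\<lambda>zs. option_code (ev_bounded (Mn f) (hd zs) (tl zs)))"
proof -
  have "computable (Suc (Suc (Suc n))) (\<lambda>ws. (\<lambda>ws. option_code (ev_bounded f (hd ws) (tl ws)))
      (map (\<lambda>g. g ws) [\<lambda>ws. ws ! 2, \<lambda>ws. ws ! 0] @ drop 3 ws))"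
    by (rule computable_compose_params[OF f]) (auto intro: computable_intros)
  then have "computable (Suc (Suc (Suc n)))
      (\<lambda>ws. option_code (ev_bounded f (drop 2 ws ! 0) (ws ! 0 # tl (drop 2 ws))))"
    by (rule computable_cong) (auto simp: numeral_eq_Suc length_Suc_conv)
  then have "computable (Suc (Suc (Suc n))) (\<lambda>ws. if ws ! 1 = 1 then
      (if option_code (ev_bounded f (drop 2 ws ! 0) (ws ! 0 # tl (drop 2 ws))) = 0 then 0
       else if option_code (ev_bounded f (drop 2 ws ! 0) (ws ! 0 # tl (drop 2 ws))) = 1
       then Suc (Suc (ws ! 0)) else 1) else ws ! 1)"
    by (intro computable_intros) auto
  from computable_rec_nat[OF computable_const this computable_nth[of 0]]
  have "computable (Suc n) (\<lambda>zs. rec_nat 1 (\<lambda>j s. if s = 1 then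
      (if option_code (ev_bounded f (zs ! 0) (j # tl zs)) = 0 then 0
       else if option_code (ev_bounded f (zs ! 0) (j # tl zs)) = 1 then Suc (Suc j) else 1) else s) (zs ! 0))"
    by simp
  then have "computable (Suc n) (\<lambda>zs. mu_state (\<lambda>j. ev_bounded f (hd zs) (j # tl zs)) (hd zs))"
    by (rule computable_cong) (auto simp: mu_state_option_code length_Suc_conv cong: if_cong)
  then show ?thesis
    unfolding ev_bounded.simps option_code_bounded_mu by (intro computable_intros)
qed

lemma computable_ev_bounded: "computable (Suc n) (\<lambda>zs. option_code (ev_bounded e (hd zs) (tl zs)))"
proof (induction e arbitrary: n)
  case Zf
  show ?case by (simp add: computable_const)
next
  case Sf
  show ?case
  proof (cases n)
    case 0
    then show ?thesis
      by (intro computable_cong[OF computable_const[of _ 0]]) (auto simp: length_Suc_conv)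
  next
    case (Suc n')
    then show ?thesis
      by (intro computable_cong[OF computable_Suc[OF computable_Suc[OF computable_nth[of 1]]]])
        (auto simp: length_Suc_conv)
  qed
next
  case (Proj i)
  show ?case
  proof (cases "i < n")
    case True
    then show ?thesis
      by (intro computable_cong[OF computable_Suc[OF computable_nth[of "Suc i"]]]) (auto simp: length_Suc_conv)
  next
    case False
    then show ?thesis
      by (intro computable_cong[OF computable_const[of _ 0]]) (auto simp: length_Suc_conv)
  qed
next
  case (Comp f hs)
  then show ?case by (intro computable_ev_bounded_Comp) auto
next
  case (Prec f h)
  show ?case
  proof (cases n)
    case 0
    then show ?thesis
      by (intro computable_cong[OF computable_const[of _ 0]])
        (auto simp: length_Suc_conv ev_bounded.simps(5))
  next
    case (Suc n')
    then show ?thesis using Prec.IH by (simp add: computable_ev_bounded_Prec)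
  qed
next
  case (Mn f)
  then show ?case by (intro computable_ev_bounded_Mn)
qed

section \<open>Reduced words\<close>

definition flip :: "letter \<Rightarrow> letter" where "flip a = (fst a, \<not> snd a)"
definition finv :: "letter list \<Rightarrow> letter list" where "finv w = rev (map flip w)"

lemma flip_flip [simp]: "flip (flip a) = a" by (simp add: flip_def)
lemma fst_flip [simp]: "fst (flip a) = fst a" by (simp add: flip_def)
lemma cancels_iff: "cancels a b \<longleftrightarrow> b = flip a"
  by (cases a; cases b) (auto simp: cancels_def flip_def)
lemma cancels_sym: "cancels a b \<longleftrightarrow> cancels b a"
  by (auto simp: cancels_def)

lemma finv_Nil [simp]: "finv [] = []" by (simp add: finv_def)
lemma finv_Cons: "finv (a # w) = finv w @ [flip a]" by (simp add: finv_def)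
lemma set_finv: "set (finv w) = flip ` set w" by (simp add: finv_def)

lemma reduced_Cons: "reduced (a # w) \<longleftrightarrow> reduced w \<and> (w = [] \<or> \<not> cancels a (hd w))"
  by (cases w) auto

lemma reduced_append:
  "reduced (u @ v) \<longleftrightarrow> reduced u \<and> reduced v \<and> (u = [] \<or> v = [] \<or> \<not> cancels (last u) (hd v))"
  by (induction u) (auto simp: reduced_Cons)

lemma reduced_finv: "reduced w \<Longrightarrow> reduced (finv w)"
proof (induction w)
  case (Cons a w)
  then show ?case
    by (cases w) (auto simp: finv_Cons reduced_Cons reduced_append cancels_def flip_def)
qed simp

lemma reduced_push: "reduced w \<Longrightarrow> reduced (push a w)"
  by (cases w) (auto simp: reduced_Cons)

lemma reduced_fmult: "reduced v \<Longrightarrow> reduced (fmult u v)"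
  by (induction u) (auto simp: fmult_def reduced_push)

lemma fmult_Nil [simp]: "fmult [] v = v" by (simp add: fmult_def)
lemma fmult_Cons: "fmult (a # u) v = push a (fmult u v)" by (simp add: fmult_def)
lemma push_flip_push: "reduced w \<Longrightarrow> push a (push (flip a) w) = w"
  by (cases w rule: remdups_adj.cases) (auto simp: cancels_iff)

lemma fmult_push: "reduced w \<Longrightarrow> fmult (push a v) w = push a (fmult v w)"
proof (cases v)
  case (Cons b v')
  assume "reduced w"
  then have "push a (push b (fmult v' w)) = fmult v' w" if "cancels a b"
    using that push_flip_push[OF reduced_fmult, of w "flip b" v'] by (simp add: cancels_iff cancels_sym)
  then show ?thesis using Cons by (auto simp: fmult_Cons)
qed (simp add: fmult_Cons)

lemma fmult_assoc: "reduced v \<Longrightarrow> reduced w \<Longrightarrow> fmult (fmult u v) w = fmult u (fmult v w)"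
  by (induction u) (simp_all add: fmult_Cons fmult_push reduced_fmult)

lemma fmult_reduced_append: "reduced (u @ v) \<Longrightarrow> fmult u v = u @ v"
proof (induction u)
  case (Cons a u)
  then have "fmult u v = u @ v" by (simp add: reduced_Cons)
  with Cons.prems show ?case by (cases "u @ v") (auto simp: fmult_Cons reduced_Cons)
qed simp

lemma fmult_Nil_right: "reduced u \<Longrightarrow> fmult u [] = u"
  using fmult_reduced_append[of u "[]"] by simp

lemma fmult_finv_append: "fmult w (finv w @ v) = v"
proof (induction w arbitrary: v)
  case (Cons a w)
  then show ?case by (simp add: fmult_Cons finv_Cons cancels_iff)
qed simp

lemma fmult_finv_left: "fmult (finv w) w = []"
  using fmult_finv_append[of "finv w" "[]"] by (simp add: finv_def rev_map comp_def)

lemma fmult_finv_right: "fmult w (finv w) = []"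
  using fmult_finv_append[of w "[]"] by simp

lemma fmult_fmult_finv: "reduced v \<Longrightarrow> reduced w \<Longrightarrow> fmult (fmult v w) (finv w) = v"
  by (simp add: fmult_assoc reduced_finv fmult_finv_right fmult_Nil_right)

lemma length_fmult: "length (fmult u v) \<le> length u + length v"
proof (induction u)
  case (Cons a u)
  have "length (push a w) \<le> Suc (length w)" for w by (cases w) auto
  with Cons show ?case by (simp add: fmult_Cons) (meson le_trans not_less_eq_eq)
qed simp

lemma set_fmult: "set (fmult u v) \<subseteq> set u \<union> set v"
proof (induction u)
  case (Cons a u)
  have "set (push a w) \<subseteq> insert a (set w)" for w by (cases w) auto
  with Cons show ?case by (fastforce simp: fmult_Cons)
qed simp

lemma FX_Nil [simp]: "[] \<in> FX k" by (simp add: FX_def)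

lemma FX_fmult: "u \<in> FX k \<Longrightarrow> v \<in> FX k \<Longrightarrow> fmult u v \<in> FX k"
  using set_fmult[of u v] reduced_fmult[of v u] unfolding FX_def by auto

lemma FX_finv: "u \<in> FX k \<Longrightarrow> finv u \<in> FX k"
  unfolding FX_def by (auto simp: set_finv reduced_finv)

lemma inj_on_fmult_left: "\<omega> \<in> FX k \<Longrightarrow> inj_on (fmult \<omega>) (FX k)"
  by (rule inj_on_inverseI[where g = "fmult (finv \<omega>)"])
    (auto simp: FX_def fmult_assoc[symmetric] reduced_finv fmult_finv_left)

lemma inj_on_fmult_right: "c \<in> FX k \<Longrightarrow> inj_on (\<lambda>v. fmult v c) (FX k)"
  by (rule inj_on_inverseI[where g = "\<lambda>v. fmult v (finv c)"]) (auto simp: FX_def fmult_fmult_finv)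

definition letter_code :: "letter \<Rightarrow> nat" where
  "letter_code a = 2 * fst a + (if snd a then 1 else 0)"

definition code_letter :: "nat \<Rightarrow> letter" where
  "code_letter d = (d div 2, d mod 2 = 1)"

definition word :: "nat \<Rightarrow> letter list" where
  "word c = map code_letter (list_decode c)"

lemma code_eq: "code w = list_encode (map letter_code w)"
  by (simp add: code_def letter_code_def [abs_def])

lemma letter_code_code_letter [simp]: "letter_code (code_letter d) = d"
  unfolding letter_code_def code_letter_def by simp presburger

lemma code_letter_letter_code [simp]: "code_letter (letter_code a) = a"
  by (cases a) (auto simp: letter_code_def code_letter_def)

lemma letter_code_eq_iff [simp]: "letter_code a = letter_code b \<longleftrightarrow> a = b"
  by (metis code_letter_letter_code)

lemma code_word [simp]: "code (word c) = c"
  by (simp add: code_eq word_def comp_def)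

lemma word_code [simp]: "word (code w) = w"
  by (simp add: code_eq word_def comp_def)

lemma code_eq_iff [simp]: "code u = code v \<longleftrightarrow> u = v"
  by (metis word_code)

lemma inj_word: "inj word"
  by (metis code_word injI)

definition flip_code :: "nat \<Rightarrow> nat" where
  "flip_code d = (if d mod 2 = 0 then d + 1 else d - 1)"

lemma flip_code_letter_code: "flip_code (letter_code a) = letter_code (flip a)"
  by (cases a) (auto simp: flip_code_def letter_code_def flip_def)

definition npush :: "nat \<Rightarrow> nat \<Rightarrow> nat" where
  "npush d c = (if c \<noteq> 0 \<and> nhd c = flip_code d then ntl c else ncons d c)"

lemma npush_code: "npush (letter_code a) (code w) = code (push a w)"
  by (cases w) (auto simp: npush_def code_eq cancels_iff flip_code_letter_code)

definition nrev :: "nat \<Rightarrow> nat" where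
  "nrev c = fold ncons (list_decode c) 0"

lemma nrev_list_encode: "nrev (list_encode ds) = list_encode (rev ds)"
proof -
  have "fold ncons ds (list_encode acc) = list_encode (rev ds @ acc)" for acc
    by (induction ds arbitrary: acc) auto
  from this[of "[]"] show ?thesis by (simp add: nrev_def)
qed

definition nfmult :: "nat \<Rightarrow> nat \<Rightarrow> nat" where
  "nfmult cu cv = fold npush (list_decode (nrev cu)) cv"

lemma nfmult_code: "nfmult (code u) (code v) = code (fmult u v)"
proof -
  have "fold npush (map letter_code xs) (code v) = code (fold push xs v)" for xs v
    by (induction xs arbitrary: v) (auto simp: npush_code)
  then show ?thesis
    by (simp add: nfmult_def code_eq nrev_list_encode fmult_def foldr_conv_fold rev_map)
qed

definition nfinv :: "nat \<Rightarrow> nat" where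
  "nfinv c = fold (\<lambda>d acc. ncons (flip_code d) acc) (list_decode c) 0"

lemma nfinv_code: "nfinv (code w) = code (finv w)"
proof -
  have "fold (\<lambda>d acc. ncons (flip_code d) acc) (map letter_code w) (list_encode acc) =
      list_encode (rev (map (letter_code \<circ> flip) w) @ acc)" for acc
    by (induction w arbitrary: acc) (auto simp: flip_code_letter_code)
  from this[of "[]"] show ?thesis by (simp add: nfinv_def code_eq finv_def rev_map)
qed

definition nvalid :: "nat \<Rightarrow> nat \<Rightarrow> bool" where
  "nvalid k c \<longleftrightarrow> (\<forall>d\<in>set (list_decode c). d < 2 * k) \<and> nfmult c 0 = c"

text \<open>A word is reduced iff free reduction leaves it unchanged.\<close>
lemma nvalid_iff: "nvalid k c \<longleftrightarrow> word c \<in> FX k"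
proof -
  have letters: "(\<forall>d\<in>set (list_decode c). d < 2 * k) \<longleftrightarrow> (\<forall>a\<in>set (word c). fst a < k)"
    by (auto simp: word_def code_letter_def)
  have "code [] = 0" by (simp add: code_eq)
  with nfmult_code[of "word c" "[]"] have "nfmult c 0 = c \<longleftrightarrow> fmult (word c) [] = word c"
    by (metis code_word code_eq_iff)
  also have "\<dots> \<longleftrightarrow> reduced (word c)"
    using reduced_fmult[of "[]" "word c"] fmult_Nil_right[of "word c"] by auto
  finally show ?thesis using letters by (simp add: nvalid_def FX_def)
qed

lemma computable_flip_code [computable_intros]: "computable n a \<Longrightarrow> computable n (\<lambda>xs. flip_code (a xs))"
  unfolding flip_code_def by (intro computable_intros)

lemma computable_nfmult [computable_intros]:
  assumes "computable n a" "computable n b"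
  shows "computable n (\<lambda>xs. nfmult (a xs) (b xs))"
proof -
  have "computable (Suc (Suc n)) (\<lambda>ys. npush (ys ! 0) (ys ! 1))"
    unfolding npush_def by (intro computable_intros) auto
  moreover have "computable n (\<lambda>xs. nrev (a xs))"
    unfolding nrev_def using assms computable_fold[of n "\<lambda>x acc _. ncons x acc"]
    by (simp add: computable_intros)
  ultimately show ?thesis
    unfolding nfmult_def using assms computable_fold[of n "\<lambda>x acc _. npush x acc"] by simp
qed

lemma computable_nfinv [computable_intros]: "computable n a \<Longrightarrow> computable n (\<lambda>xs. nfinv (a xs))"
  unfolding nfinv_def using computable_fold[of n "\<lambda>x acc _. ncons (flip_code x) acc"]
  by (simp add: computable_intros)

lemma decidable_nvalid [computable_intros]: "computable n c \<Longrightarrow> decidable n (\<lambda>xs. nvalid k (c xs))"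
proof -
  assume c: "computable n c"
  have "computable (Suc n) (\<lambda>ys. of_bool (ys ! 0 < 2 * k))"
    using decidable_less[OF computable_nth computable_const] by (simp add: decidable_def)
  then have "decidable (Suc n) (\<lambda>ys. hd ys < 2 * k)"
    unfolding decidable_def by (rule computable_cong) (auto simp: length_Suc_conv)
  then have "decidable n (\<lambda>xs. \<forall>d\<in>set (list_decode (c xs)). d < 2 * k)"
    using decidable_list_all[of n "\<lambda>d _. d < 2 * k"] c by simp
  then show ?thesis unfolding nvalid_def using c by (intro computable_intros)
qed

section \<open>Balls and their translates\<close>

lemma finite_ballF: "finite (ballF k n)"
proof (rule finite_subset)
  show "ballF k n \<subseteq> {xs. set xs \<subseteq> {..<k} \<times> UNIV \<and> length xs \<le> n}"
    by (auto simp: ballF_def FX_def)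
  show "finite {xs. set xs \<subseteq> ({..<k} \<times> (UNIV :: bool set)) \<and> length xs \<le> n}"
    by (rule finite_lists_length_le) auto
qed

lemma Nil_in_ballF [simp]: "[] \<in> ballF k n"
  by (simp add: ballF_def)

lemma card_ballF_pos: "0 < card (ballF k n)"
  using finite_ballF Nil_in_ballF by (metis card_gt_0_iff empty_iff)

lemma card_ballF_Suc_le: "card (ballF k (Suc n)) \<le> (2 * k + 1) * card (ballF k n)"
proof -
  let ?A = "{..<k} \<times> (UNIV :: bool set)"
  have "ballF k (Suc n) \<subseteq> ballF k n \<union> (\<lambda>(a, w). a # w) ` (?A \<times> ballF k n)"
  proof
    fix w assume w: "w \<in> ballF k (Suc n)"
    show "w \<in> ballF k n \<union> (\<lambda>(a, w). a # w) ` (?A \<times> ballF k n)"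
    proof (cases w)
      case (Cons a w')
      with w have "fst a < k" "length w \<le> n \<or> w' \<in> ballF k n"
        by (auto simp: ballF_def FX_def reduced_Cons)
      then have "a \<in> ?A" "length w \<le> n \<or> w' \<in> ballF k n" by (cases a, auto)
      with w Cons show ?thesis by (auto simp: ballF_def)
    qed (simp add: ballF_def)
  qed
  then have "card (ballF k (Suc n)) \<le> card (ballF k n \<union> (\<lambda>(a, w). a # w) ` (?A \<times> ballF k n))"
    by (intro card_mono) (simp_all add: finite_ballF)
  also have "\<dots> \<le> card (ballF k n) + card ((\<lambda>(a, w). a # w) ` (?A \<times> ballF k n))"
    by (rule card_Un_le)
  also have "\<dots> \<le> card (ballF k n) + card (?A \<times> ballF k n)"
    using card_image_le[of "?A \<times> ballF k n" "\<lambda>(a, w). a # w"] finite_ballF by simp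
  also have "\<dots> = (2 * k + 1) * card (ballF k n)"
    by (simp add: card_cartesian_product)
  finally show ?thesis .
qed

lemma card_ballF_add_le: "card (ballF k (n + d)) \<le> (2 * k + 1) ^ d * card (ballF k n)"
proof (induction d)
  case (Suc d)
  have "card (ballF k (n + Suc d)) \<le> (2 * k + 1) * card (ballF k (n + d))"
    using card_ballF_Suc_le[of k "n + d"] by simp
  also have "\<dots> \<le> (2 * k + 1) ^ Suc d * card (ballF k n)"
    using mult_le_mono2[OF Suc.IH, of "2 * k + 1"] by (simp only: power_Suc mult.assoc)
  finally show ?case .
qed simp

lemma fmult_in_ballF:
  "v \<in> ballF k m \<Longrightarrow> c \<in> FX k \<Longrightarrow> length c \<le> d \<Longrightarrow> fmult v c \<in> ballF k (m + d)"
  using length_fmult[of v c] FX_fmult[of v k c] by (auto simp: ballF_def)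

text \<open>For each \<open>c \<in> C\<close> the map \<open>v \<mapsto> \<omega> v c\<close> is injective, so at most \<open>card T\<close> elements of \<open>B\<close> are
  sent into \<open>T\<close> by it.\<close>
lemma exists_translate_avoiding:
  assumes \<omega>: "\<omega> \<in> FX k" and C: "C \<subseteq> FX k" "finite C" and "finite T"
    and B: "B \<subseteq> FX k" "finite B" and card: "card C * card T < card B"
  shows "\<exists>v\<in>B. \<forall>c\<in>C. fmult \<omega> (fmult v c) \<notin> T"
proof -
  define Bad where "Bad c = {v \<in> B. fmult \<omega> (fmult v c) \<in> T}" for c
  have "card (Bad c) \<le> card T" if "c \<in> C" for c
  proof (rule card_inj_on_le)
    have "c \<in> FX k" using C \<open>c \<in> C\<close> by blast
    then have "inj_on (\<lambda>v. fmult v c) B" "(\<lambda>v. fmult v c) ` B \<subseteq> FX k"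
      using B inj_on_fmult_right[of c k] FX_fmult by (auto intro: inj_on_subset)
    then have "inj_on (fmult \<omega> \<circ> (\<lambda>v. fmult v c)) B"
      using inj_on_fmult_left[OF \<omega>] by (blast intro: comp_inj_on inj_on_subset)
    then show "inj_on (\<lambda>v. fmult \<omega> (fmult v c)) (Bad c)"
      unfolding comp_def by (rule inj_on_subset) (auto simp: Bad_def)
  qed (auto simp: Bad_def \<open>finite T\<close>)
  then have "card (\<Union>c\<in>C. Bad c) \<le> card C * card T"
    using card_UN_le[OF C(2), of Bad] sum_bounded_above[of C "\<lambda>c. card (Bad c)" "card T"] by simp
  with card have "card (\<Union>c\<in>C. Bad c) < card B" by linarith
  moreover have "(\<Union>c\<in>C. Bad c) \<subseteq> B" by (auto simp: Bad_def)
  ultimately have "\<not> B \<subseteq> (\<Union>c\<in>C. Bad c)"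
    using B(2) card_seteq leD by blast
  then show ?thesis unfolding Bad_def by blast
qed

lemma card_translated_ball_diff:
  assumes "\<omega> \<in> FX k"
  shows "real (card (fmult \<omega> ` ballF k n - S)) =
    real (card (ballF k n)) - real (card (S \<inter> fmult \<omega> ` ballF k n))"
proof -
  have "card (fmult \<omega> ` ballF k n) = card (ballF k n)"
    by (rule card_image, rule inj_on_subset[OF inj_on_fmult_left[OF assms]]) (auto simp: ballF_def)
  moreover have "card (S \<inter> fmult \<omega> ` ballF k n) \<le> card (fmult \<omega> ` ballF k n)"
    by (intro card_mono) (auto simp: finite_ballF)
  ultimately show ?thesis
    by (simp add: card_Diff_subset_Int finite_ballF Int_commute of_nat_diff)
qed

definition fills_translated_balls :: "nat \<Rightarrow> letter list set \<Rightarrow> bool" where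
  "fills_translated_balls k S \<longleftrightarrow> (\<forall>\<delta>>0. \<forall>N. \<exists>n\<ge>N. \<exists>\<omega>\<in>FX k.
     real (card (S \<inter> fmult \<omega> ` ballF k n)) > (1 - \<delta>) * real (card (ballF k n)))"

lemma UB_generic_fills_translated_balls:
  assumes "UB_generic k S"
  shows "fills_translated_balls k S"
  unfolding fills_translated_balls_def
proof (intro allI impI, rule ccontr)
  fix \<delta> :: real and N assume "\<delta> > 0" and "\<not> (\<exists>n\<ge>N. \<exists>\<omega>\<in>FX k.
     real (card (S \<inter> fmult \<omega> ` ballF k n)) > (1 - \<delta>) * real (card (ballF k n)))"
  then have le: "real (card (S \<inter> fmult \<omega> ` ballF k n)) / real (card (ballF k n)) \<le> 1 - \<delta>"
    if "n \<ge> N" "\<omega> \<in> FX k" for n \<omega>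
    using that card_ballF_pos[of k n] by (auto simp: not_less pos_divide_le_eq)
  have "limsup (\<lambda>n. SUP \<omega>\<in>FX k. ereal (real (card (S \<inter> fmult \<omega> ` ballF k n)) / real (card (ballF k n))))
      \<le> ereal (1 - \<delta>)"
    using le by (intro Limsup_bounded eventually_sequentiallyI[of N] SUP_least) auto
  then show False
    using assms \<open>\<delta> > 0\<close> unfolding UB_generic_def by simp
qed

lemma generic_imp_UB_generic:
  assumes "generic k S"
  shows "UB_generic k S"
proof -
  define r where "r n = real (card ((FX k - S) \<inter> ballF k n)) / real (card (ballF k n))" for n
  define X where "X n = (SUP \<omega>\<in>FX k. ereal (real (card (S \<inter> fmult \<omega> ` ballF k n)) / real (card (ballF k n))))"
    for n
  have S: "S \<subseteq> FX k" and "r \<longlonglongrightarrow> 0"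
    using assms unfolding generic_def r_def by auto
  then have "(\<lambda>n. ereal (1 - r n)) \<longlonglongrightarrow> ereal 1"
    by (auto intro!: tendsto_eq_intros simp: lim_ereal)
  from lim_imp_Limsup[OF trivial_limit_sequentially this]
  have limsup_1: "limsup (\<lambda>n. ereal (1 - r n)) = 1" by (simp add: one_ereal_def)
  have lower: "ereal (1 - r n) \<le> X n" for n
  proof -
    have "ballF k n = (S \<inter> ballF k n) \<union> ((FX k - S) \<inter> ballF k n)"
      by (auto simp: ballF_def)
    then have "card (ballF k n) = card (S \<inter> ballF k n) + card ((FX k - S) \<inter> ballF k n)"
      by (metis card_Un_disjoint finite_Int finite_ballF Diff_disjoint Int_Diff_disjoint inf_commute
          inf_left_commute)
    then have "real (card ((FX k - S) \<inter> ballF k n)) = real (card (ballF k n)) - real (card (S \<inter> ballF k n))"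
      by simp
    then have "1 - r n = real (card (S \<inter> fmult [] ` ballF k n)) / real (card (ballF k n))"
      using card_ballF_pos[of k n] by (simp add: r_def diff_divide_distrib)
    then show ?thesis unfolding X_def by (auto intro!: SUP_upper2[of "[]"])
  qed
  have upper: "X n \<le> 1" for n
    unfolding X_def
  proof (rule SUP_least)
    fix \<omega> assume "\<omega> \<in> FX k"
    have "card (S \<inter> fmult \<omega> ` ballF k n) \<le> card (fmult \<omega> ` ballF k n)"
      by (intro card_mono) (auto simp: finite_ballF)
    also have "\<dots> \<le> card (ballF k n)"
      by (rule card_image_le[OF finite_ballF])
    finally show "ereal (real (card (S \<inter> fmult \<omega> ` ballF k n)) / real (card (ballF k n))) \<le> 1"
      using card_ballF_pos[of k n] by simp
  qed
  have "limsup X = 1"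
  proof (rule antisym)
    show "limsup X \<le> 1" using upper by (intro Limsup_bounded always_eventually) auto
    have "limsup (\<lambda>n. ereal (1 - r n)) \<le> limsup X"
      using lower by (intro Limsup_mono always_eventually) auto
    then show "1 \<le> limsup X" using limsup_1 by simp
  qed
  with S show ?thesis unfolding UB_generic_def X_def by simp
qed

text \<open>The radius \<open>n\<close> is chosen so large that the part of \<open>\<omega> B\<^sub>n\<close> missed by \<open>S\<close> is too small to meet
  all translates \<open>\<omega> v C\<close> with \<open>v \<in> B\<^bsub>n - d\<^esub>\<close>, where \<open>d\<close> bounds the lengths in \<open>C\<close>.\<close>
lemma fills_translated_balls_translate:
  assumes fills: "fills_translated_balls k S" and C: "finite C" "C \<subseteq> FX k"
  shows "\<exists>w\<in>FX k. \<forall>c\<in>C. fmult w c \<in> S"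
proof -
  define d where "d = (\<Sum>c\<in>C. length c)"
  define K where "K = (2 * k + 1) ^ d"
  define \<delta> where "\<delta> = 1 / (real (card C + 1) * real K)"
  have "\<delta> > 0" by (simp add: \<delta>_def K_def)
  with fills obtain n \<omega> where "n \<ge> d" and \<omega>: "\<omega> \<in> FX k"
    and dense: "real (card (S \<inter> fmult \<omega> ` ballF k n)) > (1 - \<delta>) * real (card (ballF k n))"
    unfolding fills_translated_balls_def by blast
  define B where "B = ballF k (n - d)"
  define T where "T = fmult \<omega> ` ballF k n - S"
  have T: "real (card T) < \<delta> * real (card (ballF k n))"
    using card_translated_ball_diff[OF \<omega>, of n S] dense by (simp add: T_def algebra_simps)
  have "card (ballF k n) \<le> K * card B"
    using card_ballF_add_le[of k "n - d" d] \<open>n \<ge> d\<close> by (simp add: K_def B_def)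
  then have "real (card C) * real (card T) \<le> real (card C) * (\<delta> * (real K * real (card B)))"
    using T \<open>\<delta> > 0\<close> by (intro mult_left_mono) (auto intro: order_trans[OF less_imp_le]
        simp flip: of_nat_mult)
  also have "\<dots> = real (card C) / real (card C + 1) * real (card B)"
    by (simp add: \<delta>_def K_def)
  also have "\<dots> < real (card B)"
    using card_ballF_pos[of k "n - d"] by (simp add: B_def divide_less_eq)
  finally have "card C * card T < card B"
    by (simp flip: of_nat_mult)
  moreover have "finite T" "finite B" "B \<subseteq> FX k"
    using finite_ballF unfolding T_def B_def by (blast, blast, simp add: ballF_def)
  ultimately obtain v where v: "v \<in> B" and avoid: "\<forall>c\<in>C. fmult \<omega> (fmult v c) \<notin> T"
    using exists_translate_avoiding[OF \<omega> C(2,1), of T B] by blast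
  have "fmult (fmult \<omega> v) c \<in> S" if "c \<in> C" for c
  proof -
    have "length c \<le> d" unfolding d_def using C that by (intro member_le_sum) auto
    then have "fmult v c \<in> ballF k n"
      using fmult_in_ballF[of v k "n - d" c d] v C that \<open>n \<ge> d\<close> by (auto simp: B_def)
    with avoid that have "fmult \<omega> (fmult v c) \<in> S" by (auto simp: T_def)
    then show ?thesis using v C that by (auto simp: fmult_assoc B_def ballF_def FX_def)
  qed
  moreover have "fmult \<omega> v \<in> FX k" using \<omega> v by (auto simp: B_def ballF_def intro: FX_fmult)
  ultimately show ?thesis by blast
qed

definition eval_letter :: "('a, 'b) monoid_scheme \<Rightarrow> (nat \<Rightarrow> 'a) \<Rightarrow> letter \<Rightarrow> 'a" where
  "eval_letter G g a = (if snd a then g (fst a) else inv\<^bsub>G\<^esub> (g (fst a)))"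

lemma piG_Nil [simp]: "piG G g [] = \<one>\<^bsub>G\<^esub>"
  by (simp add: piG_def)

lemma piG_Cons: "piG G g (a # w) = eval_letter G g a \<otimes>\<^bsub>G\<^esub> piG G g w"
  by (simp add: piG_def eval_letter_def)

locale word_map = group G for G (structure) +
  fixes k :: nat and g :: "nat \<Rightarrow> 'a"
  assumes generators_closed: "g ` {..<k} \<subseteq> carrier G"
begin

lemma eval_letter_closed: "fst a < k \<Longrightarrow> eval_letter G g a \<in> carrier G"
  using generators_closed by (auto simp: eval_letter_def)

lemma eval_letter_flip: "fst a < k \<Longrightarrow> eval_letter G g (flip a) = inv (eval_letter G g a)"
  using generators_closed by (auto simp: eval_letter_def flip_def)

lemma piG_closed: "\<forall>a\<in>set w. fst a < k \<Longrightarrow> piG G g w \<in> carrier G"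
  by (induction w) (auto simp: piG_Cons eval_letter_closed)

lemma piG_push:
  assumes "fst a < k" "\<forall>b\<in>set w. fst b < k"
  shows "piG G g (push a w) = eval_letter G g a \<otimes> piG G g w"
proof (cases w)
  case (Cons b w')
  have "eval_letter G g a \<otimes> (inv (eval_letter G g a) \<otimes> piG G g w') = piG G g w'"
    using assms Cons by (simp add: eval_letter_closed piG_closed m_assoc[symmetric])
  then show ?thesis using assms Cons by (auto simp: piG_Cons cancels_iff eval_letter_flip)
qed (simp add: piG_Cons)

lemma piG_fmult:
  "\<forall>a\<in>set u. fst a < k \<Longrightarrow> \<forall>a\<in>set v. fst a < k \<Longrightarrow> piG G g (fmult u v) = piG G g u \<otimes> piG G g v"
proof (induction u)
  case (Cons a u)
  have "\<forall>b\<in>set (fmult u v). fst b < k" using set_fmult[of u v] Cons.prems by auto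
  with Cons show ?case
    by (simp add: fmult_Cons piG_push piG_Cons m_assoc eval_letter_closed piG_closed)
qed (simp add: piG_closed)

lemma piG_closed_FX: "w \<in> FX k \<Longrightarrow> piG G g w \<in> carrier G"
  by (rule piG_closed) (auto simp: FX_def)

lemma piG_fmult_FX: "u \<in> FX k \<Longrightarrow> v \<in> FX k \<Longrightarrow> piG G g (fmult u v) = piG G g u \<otimes> piG G g v"
  by (rule piG_fmult) (auto simp: FX_def)

lemma piG_finv: "w \<in> FX k \<Longrightarrow> piG G g (finv w) = inv (piG G g w)"
  using piG_fmult_FX[OF FX_finv] fmult_finv_left piG_closed_FX FX_finv
  by (metis inv_equality piG_Nil)

lemma piG_fmult_finv_eq_one_iff:
  assumes "u \<in> FX k" "v \<in> FX k"
  shows "piG G g (fmult u (finv v)) = \<one> \<longleftrightarrow> piG G g u = piG G g v"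
proof -
  have "x \<otimes> inv y = \<one> \<longleftrightarrow> x = y" if "x \<in> carrier G" "y \<in> carrier G" for x y
    using that by (metis inv_closed inv_inv inv_equality r_inv)
  then show ?thesis
    using assms by (simp add: piG_fmult_FX FX_finv piG_finv piG_closed_FX)
qed

lemma piG_surj: "x \<in> generate G (g ` {..<k}) \<Longrightarrow> \<exists>w\<in>FX k. piG G g w = x"
proof (induction rule: generate.induct)
  case one
  show ?case by (intro bexI[of _ "[]"]) auto
next
  case (incl h)
  then obtain i where "i < k" "h = g i" by auto
  then show ?case
    using generators_closed by (intro bexI[of _ "[(i, True)]"]) (auto simp: FX_def piG_Cons eval_letter_def)
next
  case (inv h)
  then obtain i where "i < k" "h = g i" by auto
  then show ?case
    using generators_closed by (intro bexI[of _ "[(i, False)]"]) (auto simp: FX_def piG_Cons eval_letter_def)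
next
  case (eng h1 h2)
  then obtain w1 w2 where "w1 \<in> FX k" "piG G g w1 = h1" "w2 \<in> FX k" "piG G g w2 = h2" by auto
  then show ?case by (intro bexI[of _ "fmult w1 w2"]) (auto simp: piG_fmult_FX FX_fmult)
qed

lemma inj_on_piG_fmult_left:
  assumes "w \<in> FX k" "U \<subseteq> FX k" "inj_on (piG G g) U"
  shows "inj_on (\<lambda>u. piG G g (fmult w u)) U"
proof (rule inj_onI)
  fix x y assume xy: "x \<in> U" "y \<in> U" and eq: "piG G g (fmult w x) = piG G g (fmult w y)"
  have "x \<in> FX k" "y \<in> FX k" using assms(2) xy by auto
  with eq assms(1) have "piG G g x = piG G g y"
    by (simp add: piG_fmult_FX piG_closed_FX)
  then show "x = y" using inj_onD[OF assms(3) _ xy] by blast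
qed

lemma exists_words_inj_on_piG:
  assumes "infinite (carrier G)" and "generate G (g ` {..<k}) = carrier G"
  shows "\<exists>U\<subseteq>FX k. finite U \<and> card U = M \<and> inj_on (piG G g) U"
proof -
  obtain X where X: "finite X" "card X = M" "X \<subseteq> carrier G"
    using infinite_arbitrarily_large[OF assms(1)] by blast
  have "\<forall>x\<in>X. \<exists>w\<in>FX k. piG G g w = x" using piG_surj assms(2) X(3) by auto
  then obtain sel where sel: "\<forall>x\<in>X. sel x \<in> FX k \<and> piG G g (sel x) = x" by metis
  then have "inj_on sel X" by (metis inj_onI)
  then show ?thesis
    using sel X by (intro exI[of _ "sel ` X"]) (auto simp: card_image inj_on_def)
qed

end

section \<open>Enumerating pairwise distinct elements\<close>

definition certified :: "recf \<Rightarrow> nat \<Rightarrow> nat \<Rightarrow> bool" where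
  "certified f t x \<longleftrightarrow> 2 \<le> option_code (ev_bounded f t [x])"

lemma certified_iff: "certified f t x \<longleftrightarrow> (\<exists>y. ev_bounded f t [x] = Some y \<and> y \<noteq> 0)"
  by (cases "ev_bounded f t [x]") (auto simp: certified_def)

lemma decidable_certified [computable_intros]:
  assumes "computable n a" "computable n b"
  shows "decidable n (\<lambda>xs. certified f (a xs) (b xs))"
proof -
  have "computable (Suc 1) (\<lambda>v. option_code (ev_bounded f (v ! 0) [v ! 1]))"
    by (rule computable_cong[OF computable_ev_bounded[of 1 f]]) (auto simp: length_Suc_conv)
  then have "computable n (\<lambda>xs. option_code (ev_bounded f (a xs) [b xs]))"
    using computable_comp2[where F = "\<lambda>x y. option_code (ev_bounded f x [y])"] assms
    by (simp add: numeral_2_eq_2)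
  then show ?thesis unfolding certified_def by (rule decidable_le[OF computable_const])
qed

text \<open>Starting from the empty word (code \<open>0\<close>), stage \<open>s\<close> tests the candidate \<open>nfst s\<close> for time
  \<open>nsnd s\<close>: it is added if it codes a reduced word that the algorithm certifies, within that time,
  to differ from every word listed so far.\<close>
primrec enum_list :: "recf \<Rightarrow> nat \<Rightarrow> nat \<Rightarrow> nat list" where
  "enum_list f k 0 = [0]"
| "enum_list f k (Suc s) =
    (if nvalid k (nfst s) \<and> (\<forall>l\<in>set (enum_list f k s). certified f (nsnd s) (nfmult (nfst s) (nfinv l)))
     then nfst s # enum_list f k s else enum_list f k s)"

definition enum :: "recf \<Rightarrow> nat \<Rightarrow> nat \<Rightarrow> nat" where
  "enum f k s = hd (enum_list f k s)"

lemma enum_list_ne: "enum_list f k s \<noteq> []"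
  by (induction s) auto

lemma computable_enum: "computable 1 (\<lambda>v. enum f k (v ! 0))"
proof -
  define step where "step s L =
    (if nvalid k (nfst s) \<and> (\<forall>l\<in>set (list_decode L). certified f (nsnd s) (nfmult (nfst s) (nfinv l)))
     then ncons (nfst s) L else L)" for s L
  have enc: "rec_nat (list_encode [0]) (\<lambda>s L. step s L) s = list_encode (enum_list f k s)" for s
    by (induction s) (simp_all add: step_def)
  have "computable (Suc (Suc (Suc 1)))
      (\<lambda>zs. of_bool (certified f (nsnd (zs ! 1)) (nfmult (nfst (zs ! 1)) (nfinv (zs ! 0)))))"
    by (intro decidable_certified[unfolded decidable_def] computable_intros) auto
  then have "decidable (Suc (Suc (Suc 1)))
      (\<lambda>zs. certified f (nsnd (tl zs ! 0)) (nfmult (nfst (tl zs ! 0)) (nfinv (hd zs))))"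
    unfolding decidable_def by (rule computable_cong) (auto simp: length_Suc_conv numeral_eq_Suc)
  moreover have "computable (Suc (Suc 1)) (\<lambda>ys. ys ! 1)" by (rule computable_nth) simp
  ultimately have "decidable (Suc (Suc 1))
      (\<lambda>ys. \<forall>l\<in>set (list_decode (ys ! 1)). certified f (nsnd (ys ! 0)) (nfmult (nfst (ys ! 0)) (nfinv l)))"
    by (rule decidable_list_all)
  then have "computable (Suc (Suc 1)) (\<lambda>ys. step (ys ! 0) (ys ! 1))"
    unfolding step_def by (intro computable_intros) auto
  then have "computable 1 (\<lambda>v. nhd (rec_nat (list_encode [0]) (\<lambda>s L. step s L) (v ! 0)))"
    by (intro computable_intros) auto
  moreover have "nhd (list_encode (enum_list f k s)) = enum f k s" for s
    using enum_list_ne[of f k s] by (cases "enum_list f k s") (auto simp: enum_def)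
  ultimately show ?thesis by (simp add: enc)
qed

lemma enum_list_suffix: "s \<le> s' \<Longrightarrow> \<exists>xs. enum_list f k s' = xs @ enum_list f k s"
proof (induction rule: dec_induct)
  case (step m)
  then obtain xs where "enum_list f k m = xs @ enum_list f k s" by blast
  then show ?case by (auto intro: exI[of _ "nfst m # xs"])
qed simp

lemma set_enum_list_mono:
  assumes "s \<le> s'"
  shows "set (enum_list f k s) \<subseteq> set (enum_list f k s')"
proof -
  obtain xs where "enum_list f k s' = xs @ enum_list f k s"
    using enum_list_suffix[OF assms, of f k] by blast
  then show ?thesis by simp
qed

lemma set_enum_list_subset_range: "set (enum_list f k s) \<subseteq> range (enum f k)"
proof (induction s)
  case 0
  show ?case by (auto simp: enum_def intro: range_eqI[of _ _ 0])
next
  case (Suc s)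
  then show ?case by (auto simp: enum_def intro: range_eqI[of _ _ "Suc s"])
qed

lemma enum_in_set_enum_list: "enum f k s \<in> set (enum_list f k s)"
  using enum_list_ne by (auto simp: enum_def)

locale UB_generic_WP_solver = word_map G k g for G (structure) and k g +
  fixes S :: "letter list set" and f :: recf
  assumes generate_eq_carrier: "generate G (g ` {..<k}) = carrier G"
    and infinite_carrier: "infinite (carrier G)"
    and fills: "fills_translated_balls k S"
    and S_subset_FX: "S \<subseteq> FX k"
    and halts_on_S: "\<forall>w\<in>S. \<exists>y. ev f [code w] y"
    and answers_correctly: "\<forall>w\<in>FX k. \<forall>y. ev f [code w] y \<longrightarrow> (y = 0 \<longleftrightarrow> piG G g w = \<one>)"
begin

lemma nonzero_answer_imp_piG_neq:
  assumes "u \<in> FX k" "v \<in> FX k" "ev f [code (fmult u (finv v))] y" "y \<noteq> 0"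
  shows "piG G g u \<noteq> piG G g v"
  using assms answers_correctly FX_fmult[OF assms(1) FX_finv[OF assms(2)]]
  by (auto simp: piG_fmult_finv_eq_one_iff)

lemma zero_answer_imp_piG_eq:
  assumes "u \<in> FX k" "v \<in> FX k" "fmult u (finv v) \<in> S"
    and "\<not> (\<exists>y. ev f [code (fmult u (finv v))] y \<and> y \<noteq> 0)"
  shows "piG G g u = piG G g v"
proof -
  obtain y where "ev f [code (fmult u (finv v))] y" using halts_on_S assms(3) by blast
  with assms have "piG G g (fmult u (finv v)) = \<one>"
    using answers_correctly S_subset_FX by blast
  then show ?thesis using assms(1,2) piG_fmult_finv_eq_one_iff by blast
qed

text \<open>Pigeonhole: of \<open>card L + 1\<close> words \<open>w u\<close> with distinct values, one is answered to differ from
  every \<open>l\<close>, since otherwise two of them would equal the same \<open>l\<close>.\<close>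
lemma exists_word_separated:
  assumes L: "finite L" "L \<subseteq> FX k"
  shows "\<exists>w\<in>FX k. \<forall>l\<in>L. \<exists>y. ev f [code (fmult w (finv l))] y \<and> y \<noteq> 0"
proof -
  obtain U where U: "U \<subseteq> FX k" "finite U" "card U = Suc (card L)" "inj_on (piG G g) U"
    using exists_words_inj_on_piG[OF infinite_carrier generate_eq_carrier] by blast
  define C where "C = (\<lambda>(u, l). fmult u (finv l)) ` (U \<times> L)"
  have "finite C" "C \<subseteq> FX k" using U L by (auto simp: C_def intro: FX_fmult FX_finv)
  then obtain w where w: "w \<in> FX k" "\<forall>c\<in>C. fmult w c \<in> S"
    using fills_translated_balls_translate[OF fills] by blast
  have wu: "fmult w u \<in> FX k" if "u \<in> U" for u using w U that by (auto intro: FX_fmult)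
  have in_S: "fmult (fmult w u) (finv l) \<in> S" if "u \<in> U" "l \<in> L" for u l
  proof -
    have "reduced u" "reduced (finv l)" using U L that by (auto simp: FX_def reduced_finv)
    then have "fmult (fmult w u) (finv l) = fmult w (fmult u (finv l))" by (rule fmult_assoc)
    with w that show ?thesis by (auto simp: C_def)
  qed
  have "\<exists>u\<in>U. \<forall>l\<in>L. \<exists>y. ev f [code (fmult (fmult w u) (finv l))] y \<and> y \<noteq> 0"
  proof (rule ccontr)
    assume "\<not> ?thesis"
    then have "(\<lambda>u. piG G g (fmult w u)) ` U \<subseteq> piG G g ` L"
      using zero_answer_imp_piG_eq wu in_S L by blast
    moreover have "inj_on (\<lambda>u. piG G g (fmult w u)) U"
      using inj_on_piG_fmult_left[OF w(1) U(1,4)] .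
    ultimately have "card U \<le> card (piG G g ` L)"
      using card_inj_on_le L(1) by blast
    also have "\<dots> \<le> card L" by (rule card_image_le[OF L(1)])
    finally show False using U(3) by simp
  qed
  then show ?thesis using wu by blast
qed

lemma certified_imp_piG_neq:
  assumes "word c \<in> FX k" "word l \<in> FX k" "certified f t (nfmult c (nfinv l))"
  shows "piG G g (word c) \<noteq> piG G g (word l)"
proof -
  have "nfmult c (nfinv l) = code (fmult (word c) (finv (word l)))"
    by (metis code_word nfinv_code nfmult_code)
  then show ?thesis
    using assms nonzero_answer_imp_piG_neq ev_bounded_sound by (metis certified_iff)
qed

lemma enum_list_invariant:
  "(\<forall>c\<in>set (enum_list f k s). word c \<in> FX k) \<and> distinct (enum_list f k s) \<and>
    inj_on (piG G g \<circ> word) (set (enum_list f k s))"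
proof (induction s)
  case 0
  show ?case by (simp add: word_def)
next
  case (Suc s)
  let ?c = "nfst s" and ?L = "enum_list f k s"
  show ?case
  proof (cases "nvalid k ?c \<and> (\<forall>l\<in>set ?L. certified f (nsnd s) (nfmult ?c (nfinv l)))")
    case True
    then have "piG G g (word ?c) \<noteq> piG G g (word l)" if "l \<in> set ?L" for l
      using Suc that certified_imp_piG_neq by (auto simp: nvalid_iff)
    then show ?thesis using Suc True by (auto simp: nvalid_iff)
  next
    case False
    then have "enum_list f k (Suc s) = enum_list f k s" by (simp only: enum_list.simps if_not_P if_False)
    with Suc show ?thesis by simp
  qed
qed

lemma enum_list_grows: "\<exists>s'. length (enum_list f k s) < length (enum_list f k s')"
proof -
  let ?L = "enum_list f k s"
  obtain w where w: "w \<in> FX k"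
    and sep: "\<forall>l\<in>word ` set ?L. \<exists>y. ev f [code (fmult w (finv l))] y \<and> y \<noteq> 0"
    using exists_word_separated[of "word ` set ?L"] enum_list_invariant[of s] by auto
  have "\<forall>l\<in>set ?L. \<forall>\<^sub>F t in sequentially. certified f t (nfmult (code w) (nfinv l))"
  proof
    fix l assume "l \<in> set ?L"
    then obtain y where "ev f [code (fmult w (finv (word l)))] y" "y \<noteq> 0" using sep by blast
    moreover have "nfmult (code w) (nfinv l) = code (fmult w (finv (word l)))"
      by (metis code_word nfinv_code nfmult_code)
    ultimately show "\<forall>\<^sub>F t in sequentially. certified f t (nfmult (code w) (nfinv l))"
      by (auto simp: certified_iff elim!: eventually_mono dest!: ev_imp_eventually_ev_bounded)
  qed
  then have "\<forall>\<^sub>F t in sequentially. \<forall>l\<in>set ?L. certified f t (nfmult (code w) (nfinv l))"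
    by (rule eventually_ball_finite[OF finite_set])
  then obtain T where T: "\<forall>t\<ge>T. \<forall>l\<in>set ?L. certified f t (nfmult (code w) (nfinv l))"
    unfolding eventually_sequentially by blast
  define s' where "s' = npair (code w) (T + s)"
  have "s \<le> s'" using le_prod_encode_2[of "T + s" "code w"] by (simp add: s'_def npair_def)
  then obtain xs where xs: "enum_list f k s' = xs @ ?L" using enum_list_suffix by blast
  show ?thesis
  proof (cases "xs = []")
    case True
    then have "enum_list f k (Suc s') = code w # ?L" using T w xs by (simp add: s'_def nvalid_iff)
    then show ?thesis by (intro exI[of _ "Suc s'"]) simp
  next
    case False
    with xs show ?thesis by (intro exI[of _ s']) simp
  qed
qed

lemma enum_list_unbounded: "\<exists>s. M < length (enum_list f k s)"
proof (induction M)
  case 0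
  show ?case using enum_list_ne by (auto intro: exI[of _ 0])
next
  case (Suc M)
  then obtain s where "M < length (enum_list f k s)" by blast
  with enum_list_grows[of s] show ?case by (metis Suc_le_eq le_less_trans not_less_eq_eq)
qed

lemma inj_on_piG_word_enum: "inj_on (piG G g \<circ> word) (range (enum f k))"
proof (rule inj_onI)
  fix c c' assume "c \<in> range (enum f k)" "c' \<in> range (enum f k)"
    and eq: "(piG G g \<circ> word) c = (piG G g \<circ> word) c'"
  then obtain s s' where "c = enum f k s" "c' = enum f k s'" by blast
  then have mem: "c \<in> set (enum_list f k (max s s'))" "c' \<in> set (enum_list f k (max s s'))"
    using enum_in_set_enum_list[of f k] set_enum_list_mono[of s "max s s'" f k]
      set_enum_list_mono[of s' "max s s'" f k] by auto
  have "inj_on (piG G g \<circ> word) (set (enum_list f k (max s s')))"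
    using enum_list_invariant by blast
  from inj_onD[OF this eq mem] show "c = c'" .
qed

lemma infinite_range_enum: "infinite (range (enum f k))"
proof
  assume fin: "finite (range (enum f k))"
  obtain s where "card (range (enum f k)) < length (enum_list f k s)"
    using enum_list_unbounded by blast
  also have "\<dots> = card (set (enum_list f k s))"
    using enum_list_invariant[of s] by (simp add: distinct_card)
  also have "\<dots> \<le> card (range (enum f k))"
    using set_enum_list_subset_range fin by (rule card_mono[rotated])
  finally show False by simp
qed

theorem not_algorithmically_finite: "\<not> algorithmically_finite G k g"
proof -
  let ?E = "word ` range (enum f k)"
  obtain e where "\<forall>n. \<exists>y. ev e [n] y" "{y. \<exists>n. ev e [n] y} = code ` ?E"
    using computable_enumerates[OF computable_enum[of f k]] by (auto simp: image_image)
  moreover have "?E \<subseteq> FX k"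
  proof
    fix u assume "u \<in> ?E"
    then obtain s where "u = word (enum f k s)" by blast
    then show "u \<in> FX k" using enum_in_set_enum_list[of f k s] enum_list_invariant[of s] by blast
  qed
  moreover have "inj_on (piG G g) ?E"
    using inj_on_piG_word_enum by (rule inj_on_imageI)
  moreover have "infinite ?E"
    using infinite_range_enum inj_on_subset[OF inj_word, of "range (enum f k)"]
    by (simp add: finite_image_iff)
  ultimately show ?thesis unfolding algorithmically_finite_def by blast
qed

end

lemma UB_generic_WP_solvable_imp_not_algorithmically_finite:
  assumes "group G" "g ` {..<k} \<subseteq> carrier G" "generate G (g ` {..<k}) = carrier G"
    and "infinite (carrier G)" and "UB_generic_WP_solvable G k g"
  shows "\<not> algorithmically_finite G k g"
proof -
  obtain S f where "UB_generic k S" "\<forall>w\<in>S. \<exists>y. ev f [code w] y"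
    "\<forall>w\<in>FX k. \<forall>y. ev f [code w] y \<longrightarrow> (y = 0 \<longleftrightarrow> piG G g w = \<one>\<^bsub>G\<^esub>)"
    using assms(5) unfolding UB_generic_WP_solvable_def WP_solvable_on_def by blast
  moreover have "word_map G k g"
    using assms(1,2) by (simp add: word_map_def word_map_axioms_def)
  ultimately interpret UB_generic_WP_solver G k g S f
    using assms(3,4) UB_generic_fills_translated_balls
    by (simp add: UB_generic_WP_solver_def UB_generic_WP_solver_axioms_def UB_generic_def)
  show ?thesis by (rule not_algorithmically_finite)
qed

theorem corollary4p3:
  fixes G :: "('a, 'b) monoid_scheme" and k :: nat and g :: "nat \<Rightarrow> 'a"
  assumes "group G"
    and "infinite (carrier G)"
    and "g ` {..<k} \<subseteq> carrier G"
    and "generate G (g ` {..<k}) = carrier G"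
    and "algorithmically_finite G k g"
  shows "\<not> UB_generic_WP_solvable G k g \<and> \<not> generic_WP_solvable G k g"
proof -
  have "\<not> UB_generic_WP_solvable G k g"
    using UB_generic_WP_solvable_imp_not_algorithmically_finite assms by blast
  moreover have "generic_WP_solvable G k g \<Longrightarrow> UB_generic_WP_solvable G k g"
    unfolding generic_WP_solvable_def UB_generic_WP_solvable_def using generic_imp_UB_generic by blast
  ultimately show ?thesis by blast
qed

end
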